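(* Let $E\subset\mathbb{R}^{n+1}$ be closed, $\Omega:=\mathbb{R}^{n+1}\setminus E$, $\delta(X):=\operatorname{dist}(X,E)$. Let $G_0\in\mathrm{BV}_{\mathrm{loc}}(\Omega)$ be such that $\mu:=|\nabla G_0(Y)|\,dY$ is a Carleson measure with Carleson norm $C_\mu$, and let $G$ be the regularization of $G_0$ defined below. Then $|\nabla G(Y)|\,dY$ is a Carleson measure, and $$\sup_{r>0,\,z\in E}\frac{1}{r^n}\iint_{B(z,r)\cap\Omega}|\nabla G(X)|\,dX\le C\,C_\mu,$$ with $C$ depending only on $n$ and the choices of $\beta$ and $\zeta$.
   Context: Let $\beta:\Omega\to(0,\infty)$ be smooth with $m_1\delta\le\beta\le m_2\delta$ and $|\partial^\alpha\beta|\le C_\alpha\beta^{1-|\alpha|}$ for all multi-indices $\alpha$. Let $\zeta\ge0$ be smooth, supported in $B(0,\tfrac1{2m_2})$, $\zeta\le1$, $\int\zeta=1$. Define $G(X):=\iint\beta(X)^{-n-1}\zeta((X-Y)/\beta(X))\,G_0(Y)\,dY$. $\mu$ is a Carleson measure if $C_\mu:=\sup_{x\in E,r>0}\mu(B(x,r)\cap\Omega)/r^n<\infty$. $\mathrm{BV}_{\mathrm{loc}}(\Omega)$: locally integrable functions with finite total variation on every relatively compact open subset; $|\nabla G_0|\,dY$ is the total variation measure. *)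

theory Defs
  imports "HOL-Analysis.Analysis"
begin

text \<open>With directions from Basis this
  covers all partial derivatives of multi-index order k.\<close>
fun iderv :: "('a::real_normed_vector \<Rightarrow> real) \<Rightarrow> 'a list \<Rightarrow> 'a \<Rightarrow> real" where
  "iderv f [] = f"
| "iderv f (v # vs) = (\<lambda>X. frechet_derivative (iderv f vs) (at X) v)"

definition smooth_on :: "'a::euclidean_space set \<Rightarrow> ('a \<Rightarrow> real) \<Rightarrow> bool" where
  "smooth_on S f \<longleftrightarrow> (\<forall>vs. set vs \<subseteq> Basis \<longrightarrow> (\<forall>X\<in>S. iderv f vs differentiable (at X)))"

definition divergence :: "('a::euclidean_space \<Rightarrow> 'a) \<Rightarrow> 'a \<Rightarrow> real" where
  "divergence \<phi> X = (\<Sum>b\<in>Basis. frechet_derivative \<phi> (at X) b \<bullet> b)"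

definition grad :: "('a::euclidean_space \<Rightarrow> real) \<Rightarrow> 'a \<Rightarrow> 'a" where
  "grad f X = (\<Sum>b\<in>Basis. frechet_derivative f (at X) b *\<^sub>R b)"

definition test_fields :: "'a::euclidean_space set \<Rightarrow> ('a \<Rightarrow> 'a) set" where
  "test_fields U = {\<phi>. (\<forall>X. \<phi> differentiable (at X))
      \<and> (\<forall>b\<in>Basis. continuous_on UNIV (\<lambda>X. frechet_derivative \<phi> (at X) b))
      \<and> compact (closure {X. \<phi> X \<noteq> 0}) \<and> closure {X. \<phi> X \<noteq> 0} \<subseteq> U
      \<and> (\<forall>X. norm (\<phi> X) \<le> 1)}"

text \<open>Total variation of f on an open set U, i.e. the total variation measure
  |\<nabla>f|(U) (the value of the variation measure on the open set U).\<close>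
definition total_variation :: "('a::euclidean_space \<Rightarrow> real) \<Rightarrow> 'a set \<Rightarrow> ennreal" where
  "total_variation f U = (SUP \<phi>\<in>test_fields U. ennreal (integral\<^sup>L lborel (\<lambda>X. f X * divergence \<phi> X)))"

definition loc_integrable :: "'a::euclidean_space set \<Rightarrow> ('a \<Rightarrow> real) \<Rightarrow> bool" where
  "loc_integrable \<Omega> f \<longleftrightarrow> (\<forall>K. compact K \<and> K \<subseteq> \<Omega> \<longrightarrow> set_integrable lborel K f)"

definition BV_loc :: "'a::euclidean_space set \<Rightarrow> ('a \<Rightarrow> real) \<Rightarrow> bool" where
  "BV_loc \<Omega> f \<longleftrightarrow> loc_integrable \<Omega> f \<and>
     (\<forall>U. open U \<and> compact (closure U) \<and> closure U \<subseteq> \<Omega> \<longrightarrow> total_variation f U < \<infinity>)"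

text \<open>Carleson norm of a measure \<mu> (given by its values on sets) relative to E,
  in ambient dimension n+1 = DIM('a).\<close>
definition carleson_norm :: "'a::euclidean_space set \<Rightarrow> ('a set \<Rightarrow> ennreal) \<Rightarrow> ennreal" where
  "carleson_norm E \<mu> = (SUP x\<in>E. SUP r\<in>{0<..}.
      \<mu> (ball x r \<inter> (UNIV - E)) / ennreal (r ^ (DIM('a) - 1)))"

definition regularize :: "('a::euclidean_space \<Rightarrow> real) \<Rightarrow> ('a \<Rightarrow> real) \<Rightarrow> ('a \<Rightarrow> real) \<Rightarrow> 'a \<Rightarrow> real" where
  "regularize \<beta> \<zeta> G0 X = integral\<^sup>L lborel
     (\<lambda>Y. \<beta> X powr (- real DIM('a)) * \<zeta> ((1 / \<beta> X) *\<^sub>R (X - Y)) * G0 Y)"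

end

theory Submission
  imports Defs
begin

text \<open>
  Write \<open>G(X) = \<integral> K(X, Y) G\<^sub>0(Y) dY\<close> with \<open>K(X, Y) = \<beta>(X)^(-n-1) \<zeta>((X - Y) / \<beta>(X))\<close>; the
  kernel \<open>K(X, \<cdot>)\<close> lives in the Whitney-type ball \<open>B(X, \<delta>(X)/2)\<close>. The derivative \<open>\<partial>\<^sub>b K(X, \<cdot>)\<close>
  is the exact divergence \<open>div\<^sub>Y W\<^sub>b(X, \<cdot>)\<close> of a field with \<open>|W\<^sub>b(X, Y)| \<le> C \<delta>(Y)^(-n-1)\<close> supported
  in \<open>|X - Y| \<le> \<delta>(X)/2\<close>, so \<open>\<integral> |W\<^sub>b(X, Y)| dX\<close> is bounded uniformly in \<open>Y\<close>. For a compact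
  \<open>A \<subseteq> B(z, r) - E\<close> and a suitable constant \<open>M\<close> depending only on \<open>n\<close>, \<open>\<beta>\<close> and \<open>\<zeta>\<close>, the field
  \<open>\<Phi>(Y) = M\<^sup>-\<^sup>1 \<integral>\<^sub>A sgn(\<partial>\<^sub>b G(X)) W\<^sub>b(X, Y) dX\<close> is therefore an admissible test field supported
  in \<open>B(z, 2r) - E\<close>, and Fubini gives
  \<open>\<integral>\<^sub>A |\<partial>\<^sub>b G| = M \<integral> G\<^sub>0 div \<Phi> \<le> M |\<nabla>G\<^sub>0|(B(z, 2r) - E)\<close>. Exhausting \<open>B(z, r) - E\<close> by compact
  sets and summing over \<open>b\<close> bounds \<open>|\<nabla>G|(B(z, r) - E)\<close> by \<open>|\<nabla>G\<^sub>0|(B(z, 2r) - E)\<close>, which is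
  the Carleson estimate with the doubled radius.
\<close>

section \<open>Integrals depending on a parameter\<close>

lemma integrable_continuous_mult:
  fixes f g :: "'b::euclidean_space \<Rightarrow> real"
  assumes S: "compact S" and f: "continuous_on S f" and g: "integrable lborel g"
    and g0: "\<And>y. y \<notin> S \<Longrightarrow> g y = 0"
  shows "integrable lborel (\<lambda>y. f y * g y)"
proof -
  obtain B where B: "\<And>y. y \<in> S \<Longrightarrow> norm (f y) \<le> B"
    using compact_imp_bounded[OF compact_continuous_image[OF f S]] unfolding bounded_iff by auto
  have eq: "(\<lambda>y. f y * g y) = (\<lambda>y. (indicator S y *\<^sub>R f y) * g y)"
    using g0 by (auto simp: indicator_def fun_eq_iff)
  have "(\<lambda>y. indicator S y *\<^sub>R f y) \<in> borel_measurable lborel"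
    using borel_measurable_continuous_on_indicator[OF _ f] S
    by (simp add: compact_imp_closed borel_closed measurable_lborel1)
  show ?thesis unfolding eq
  proof (rule Bochner_Integration.integrable_bound[where f="\<lambda>y. B * g y"])
    show "integrable lborel (\<lambda>y. B * g y)" using g by simp
    show "(\<lambda>y. (indicator S y *\<^sub>R f y) * g y) \<in> borel_measurable lborel"
      using \<open>(\<lambda>y. indicator S y *\<^sub>R f y) \<in> borel_measurable lborel\<close> borel_measurable_integrable[OF g]
      by measurable
    show "AE y in lborel. norm ((indicator S y *\<^sub>R f y) * g y) \<le> norm (B * g y)"
    proof (rule AE_I2)
      fix y show "norm ((indicator S y *\<^sub>R f y) * g y) \<le> norm (B * g y)"
        using B[of y] g0[of y] by (cases "y \<in> S") (auto simp: abs_mult mult_right_mono)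
    qed
  qed
qed

lemma integrable_indicator_mult_continuous:
  fixes f :: "'b::euclidean_space \<Rightarrow> real"
  assumes "compact A" "continuous_on A f"
  shows "integrable lborel (\<lambda>x. indicator A x * f x)"
proof -
  have "integrable lborel (\<lambda>x. f x * indicator A x)"
    by (rule integrable_continuous_mult[OF assms]) (auto intro!: integrable_real_indicator
        emeasure_compact_finite simp: assms compact_imp_closed borel_closed)
  then show ?thesis by (simp add: mult.commute)
qed

lemma abs_integral_mult_le_on_support:
  fixes F g :: "'b::euclidean_space \<Rightarrow> real"
  assumes "integrable lborel (\<lambda>y. F y * g y)" "integrable lborel g"
    and "\<And>y. y \<notin> S \<Longrightarrow> g y = 0" "\<And>y. y \<in> S \<Longrightarrow> \<bar>F y\<bar> \<le> e"
  shows "\<bar>\<integral>y. F y * g y \<partial>lborel\<bar> \<le> e * (\<integral>y. \<bar>g y\<bar> \<partial>lborel)"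
proof -
  have "\<bar>\<integral>y. F y * g y \<partial>lborel\<bar> \<le> (\<integral>y. \<bar>F y * g y\<bar> \<partial>lborel)"
    using integral_norm_bound[of lborel "\<lambda>y. F y * g y"] by simp
  also have "\<dots> \<le> (\<integral>y. e * \<bar>g y\<bar> \<partial>lborel)"
  proof (rule integral_mono)
    fix y show "\<bar>F y * g y\<bar> \<le> e * \<bar>g y\<bar>"
      using assms(3,4)[of y] by (cases "y \<in> S") (auto simp: abs_mult mult_right_mono)
  qed (use assms(1,2) in auto)
  also have "\<dots> = e * (\<integral>y. \<bar>g y\<bar> \<partial>lborel)" by simp
  finally show ?thesis .
qed

lemma continuous_on_slice_fst:
  assumes "continuous_on (A \<times> B) (\<lambda>(x, y). f x y)" "x \<in> A"
  shows "continuous_on B (f x)"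
proof -
  have "continuous_on B (\<lambda>y. (\<lambda>(x, y). f x y) (x, y))"
    by (rule continuous_on_compose2[OF assms(1)]) (use assms(2) in \<open>auto intro!: continuous_intros\<close>)
  then show ?thesis by simp
qed

lemma continuous_on_slice_snd:
  assumes "continuous_on (A \<times> B) (\<lambda>(x, y). f x y)" "y \<in> B"
  shows "continuous_on A (\<lambda>x. f x y)"
proof -
  have "continuous_on A (\<lambda>x. (\<lambda>(x, y). f x y) (x, y))"
    by (rule continuous_on_compose2[OF assms(1)]) (use assms(2) in \<open>auto intro!: continuous_intros\<close>)
  then show ?thesis by simp
qed

lemma continuous_on_parametric_integral:
  fixes f :: "'a::metric_space \<Rightarrow> 'b::euclidean_space \<Rightarrow> real" and g :: "'b \<Rightarrow> real"
  assumes S: "compact S" and g: "integrable lborel g" and g0: "\<And>y. y \<notin> S \<Longrightarrow> g y = 0"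
    and f: "continuous_on (U \<times> S) (\<lambda>(x, y). f x y)"
  shows "continuous_on U (\<lambda>x. \<integral>y. f x y * g y \<partial>lborel)"
  unfolding continuous_on_iff
proof (intro ballI allI impI)
  fix x0 e assume x0: "x0 \<in> U" and e: "(e::real) > 0"
  define I where "I = (\<integral>y. \<bar>g y\<bar> \<partial>lborel)"
  have I: "I \<ge> 0" by (simp add: I_def)
  define c where "c = e / (I + 1)"
  have c: "c > 0" using e I by (simp add: c_def)
  obtain X0 where X0: "x0 \<in> X0" "open X0"
    and close: "\<forall>x\<in>X0 \<inter> U. \<forall>y\<in>S. dist (f x y) (f x0 y) \<le> c"
    using continuous_on_prod_compactE[OF f S x0 c] by auto
  obtain d where d: "d > 0" "ball x0 d \<subseteq> X0" using X0 openE by blast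
  have int: "integrable lborel (\<lambda>y. f x y * g y)" if "x \<in> U" for x
    by (rule integrable_continuous_mult[OF S continuous_on_slice_fst[OF f that] g g0])
  show "\<exists>d>0. \<forall>x\<in>U. dist x x0 < d \<longrightarrow> dist (\<integral>y. f x y * g y \<partial>lborel) (\<integral>y. f x0 y * g y \<partial>lborel) < e"
  proof (intro exI[of _ d] conjI ballI impI)
    fix x assume x: "x \<in> U" "dist x x0 < d"
    have "dist (\<integral>y. f x y * g y \<partial>lborel) (\<integral>y. f x0 y * g y \<partial>lborel)
        = \<bar>\<integral>y. (f x y - f x0 y) * g y \<partial>lborel\<bar>"
      using int[OF x(1)] int[OF x0] by (simp add: dist_real_def left_diff_distrib)
    also have "\<dots> \<le> c * I"
      unfolding I_def using close x d int[OF x(1)] int[OF x0]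
      by (intro abs_integral_mult_le_on_support[OF _ g g0])
         (auto simp: left_diff_distrib dist_real_def dist_commute)
    also have "\<dots> < e" using e I by (simp add: c_def field_simps)
    finally show "dist (\<integral>y. f x y * g y \<partial>lborel) (\<integral>y. f x0 y * g y \<partial>lborel) < e" .
  qed (rule d(1))
qed

lemma linearization_error_le:
  fixes k :: "'a::euclidean_space \<Rightarrow> real"
  assumes "convex B" "x0 \<in> B" "x \<in> B"
    and der: "\<And>z. z \<in> B \<Longrightarrow> (k has_derivative (\<lambda>h. dk z \<bullet> h)) (at z)"
    and close: "\<And>z. z \<in> B \<Longrightarrow> norm (dk z - dk x0) \<le> e"
  shows "\<bar>k x - k x0 - dk x0 \<bullet> (x - x0)\<bar> \<le> e * norm (x - x0)"
proof -
  have "norm ((\<lambda>x. k x - dk x0 \<bullet> x) x - (\<lambda>x. k x - dk x0 \<bullet> x) x0) \<le> e * norm (x - x0)"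
  proof (rule differentiable_bound[where f'="\<lambda>z h. (dk z - dk x0) \<bullet> h", OF assms(1) _ _ assms(3,2)])
    fix z assume z: "z \<in> B"
    have "((\<lambda>x. k x - dk x0 \<bullet> x) has_derivative (\<lambda>h. dk z \<bullet> h - dk x0 \<bullet> h)) (at z)"
      by (intro has_derivative_diff der[OF z] bounded_linear_imp_has_derivative bounded_linear_inner_right)
    then show "((\<lambda>x. k x - dk x0 \<bullet> x) has_derivative (\<lambda>h. (dk z - dk x0) \<bullet> h)) (at z within B)"
      by (auto intro: has_derivative_at_withinI simp: inner_diff_left)
    show "onorm (\<lambda>h. (dk z - dk x0) \<bullet> h) \<le> e"
    proof (rule onorm_le)
      fix h
      have "norm ((dk z - dk x0) \<bullet> h) \<le> norm (dk z - dk x0) * norm h"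
        by (simp add: Cauchy_Schwarz_ineq2)
      also have "\<dots> \<le> e * norm h" using close[OF z] by (simp add: mult_right_mono)
      finally show "norm ((dk z - dk x0) \<bullet> h) \<le> e * norm h" .
    qed
  qed
  then show ?thesis by (simp add: inner_diff_right algebra_simps)
qed

lemma bounded_linear_integral_inner:
  fixes v :: "'b::euclidean_space \<Rightarrow> 'a::euclidean_space" and g :: "'b \<Rightarrow> real"
  assumes int: "\<And>h. integrable lborel (\<lambda>y. (v y \<bullet> h) * g y)"
  shows "bounded_linear (\<lambda>h. \<integral>y. (v y \<bullet> h) * g y \<partial>lborel)"
proof -
  define w where "w = (\<Sum>b\<in>Basis. (\<integral>y. (v y \<bullet> b) * g y \<partial>lborel) *\<^sub>R b)"
  have "(\<integral>y. (v y \<bullet> h) * g y \<partial>lborel) = w \<bullet> h" for h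
  proof -
    have "(\<integral>y. (v y \<bullet> h) * g y \<partial>lborel) = (\<integral>y. (\<Sum>b\<in>Basis. (h \<bullet> b) * ((v y \<bullet> b) * g y)) \<partial>lborel)"
      by (rule Bochner_Integration.integral_cong[OF refl])
         (simp add: euclidean_inner[of "v _" h] sum_distrib_right sum_distrib_left mult_ac)
    also have "\<dots> = (\<Sum>b\<in>Basis. (h \<bullet> b) * (\<integral>y. (v y \<bullet> b) * g y \<partial>lborel))"
      using int by (simp add: Bochner_Integration.integral_sum)
    also have "\<dots> = w \<bullet> h"
      by (simp add: w_def inner_sum_left inner_sum_right mult_ac inner_commute)
    finally show ?thesis .
  qed
  then show ?thesis by (simp add: bounded_linear_inner_right)
qed

lemma uniform_linearization_error_le:
  fixes k :: "'a::euclidean_space \<Rightarrow> 'b::euclidean_space \<Rightarrow> real"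
  assumes U: "open U" and S: "compact S" and x0: "x0 \<in> U" and c: "0 < c"
    and der: "\<And>x y. x \<in> U \<Longrightarrow> y \<in> S \<Longrightarrow> ((\<lambda>x. k x y) has_derivative (\<lambda>h. dk x y \<bullet> h)) (at x)"
    and dk: "continuous_on (U \<times> S) (\<lambda>(x, y). dk x y)"
  obtains d where "0 < d" "ball x0 d \<subseteq> U"
    "\<And>x y. x \<in> ball x0 d \<Longrightarrow> y \<in> S \<Longrightarrow>
      \<bar>k x y - k x0 y - dk x0 y \<bullet> (x - x0)\<bar> \<le> c * norm (x - x0)"
proof -
  obtain X0 where X0: "x0 \<in> X0" "open X0"
    and close: "\<forall>x\<in>X0 \<inter> U. \<forall>y\<in>S. dist (dk x y) (dk x0 y) \<le> c"
    using continuous_on_prod_compactE[OF dk S x0 c] by auto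
  obtain d where d: "0 < d" "ball x0 d \<subseteq> X0 \<inter> U"
    using X0 U x0 by (meson open_Int openE IntI)
  show ?thesis
  proof (rule that[OF d(1)])
    show "ball x0 d \<subseteq> U" using d(2) by blast
    fix x y assume x: "x \<in> ball x0 d" and y: "y \<in> S"
    show "\<bar>k x y - k x0 y - dk x0 y \<bullet> (x - x0)\<bar> \<le> c * norm (x - x0)"
    proof (rule linearization_error_le[OF convex_ball _ x])
      show "x0 \<in> ball x0 d" using d by simp
      fix z assume "z \<in> ball x0 d"
      then have "z \<in> X0 \<inter> U" using d by blast
      then show "((\<lambda>x. k x y) has_derivative (\<lambda>h. dk z y \<bullet> h)) (at z)" "norm (dk z y - dk x0 y) \<le> c"
        using der y close by (auto simp: dist_norm)
    qed
  qed
qed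

lemma has_derivative_parametric_integral:
  fixes k :: "'a::euclidean_space \<Rightarrow> 'b::euclidean_space \<Rightarrow> real" and dk :: "'a \<Rightarrow> 'b \<Rightarrow> 'a"
  assumes U: "open U" and S: "compact S" and g: "integrable lborel g"
    and g0: "\<And>y. y \<notin> S \<Longrightarrow> g y = 0"
    and der: "\<And>x y. x \<in> U \<Longrightarrow> y \<in> S \<Longrightarrow> ((\<lambda>x. k x y) has_derivative (\<lambda>h. dk x y \<bullet> h)) (at x)"
    and dk: "continuous_on (U \<times> S) (\<lambda>(x, y). dk x y)"
    and k: "\<And>x. x \<in> U \<Longrightarrow> continuous_on S (k x)"
    and x0: "x0 \<in> U"
  shows "((\<lambda>x. \<integral>y. k x y * g y \<partial>lborel) has_derivative (\<lambda>h. \<integral>y. (dk x0 y \<bullet> h) * g y \<partial>lborel)) (at x0)"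
  unfolding has_derivative_at_alt
proof (intro conjI allI impI)
  have int_k: "integrable lborel (\<lambda>y. k x y * g y)" if "x \<in> U" for x
    by (rule integrable_continuous_mult[OF S k[OF that] g g0])
  have int_dk: "integrable lborel (\<lambda>y. (dk x0 y \<bullet> h) * g y)" for h
    by (rule integrable_continuous_mult[OF S _ g g0])
       (auto intro!: continuous_intros continuous_on_slice_fst[OF dk x0])
  then show "bounded_linear (\<lambda>h. \<integral>y. (dk x0 y \<bullet> h) * g y \<partial>lborel)"
    by (rule bounded_linear_integral_inner)
  fix e :: real assume e: "e > 0"
  define I where "I = (\<integral>y. \<bar>g y\<bar> \<partial>lborel)"
  define c where "c = e / (I + 1)"
  have I: "I \<ge> 0" by (simp add: I_def)
  then have c: "c > 0" "c * I \<le> e" using e by (simp_all add: c_def field_simps)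
  obtain d where d: "0 < d" "ball x0 d \<subseteq> U" and lin:
    "\<And>x y. x \<in> ball x0 d \<Longrightarrow> y \<in> S \<Longrightarrow> \<bar>k x y - k x0 y - dk x0 y \<bullet> (x - x0)\<bar> \<le> c * norm (x - x0)"
    using uniform_linearization_error_le[OF U S x0 c(1) der dk] by blast
  show "\<exists>d>0. \<forall>x. norm (x - x0) < d \<longrightarrow>
    norm ((\<integral>y. k x y * g y \<partial>lborel) - (\<integral>y. k x0 y * g y \<partial>lborel)
      - (\<integral>y. (dk x0 y \<bullet> (x - x0)) * g y \<partial>lborel)) \<le> e * norm (x - x0)"
  proof (intro exI[of _ d] conjI allI impI)
    fix x assume "norm (x - x0) < d"
    then have x: "x \<in> ball x0 d" by (simp add: dist_norm norm_minus_commute)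
    then have xU: "x \<in> U" using d by auto
    have "(\<integral>y. k x y * g y \<partial>lborel) - (\<integral>y. k x0 y * g y \<partial>lborel)
          - (\<integral>y. (dk x0 y \<bullet> (x - x0)) * g y \<partial>lborel)
        = (\<integral>y. (k x y - k x0 y - dk x0 y \<bullet> (x - x0)) * g y \<partial>lborel)"
      using int_k[OF xU] int_k[OF x0] int_dk[of "x - x0"]
      by (simp add: left_diff_distrib Bochner_Integration.integral_diff)
    also have "\<bar>\<dots>\<bar> \<le> c * norm (x - x0) * I"
      unfolding I_def using int_k[OF xU] int_k[OF x0] int_dk[of "x - x0"] lin[OF x]
      by (intro abs_integral_mult_le_on_support[OF _ g g0]) (auto simp: left_diff_distrib)
    also have "\<dots> \<le> e * norm (x - x0)"
      using mult_right_mono[OF c(2) norm_ge_zero[of "x - x0"]] by (simp add: mult_ac)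
    finally show "norm ((\<integral>y. k x y * g y \<partial>lborel) - (\<integral>y. k x0 y * g y \<partial>lborel)
      - (\<integral>y. (dk x0 y \<bullet> (x - x0)) * g y \<partial>lborel)) \<le> e * norm (x - x0)" by simp
  qed (rule d(1))
qed

section \<open>Gradients, divergences and smoothness\<close>

lemma grad_eq_of_has_derivative:
  "(f has_derivative D) (at X) \<Longrightarrow> grad f X = (\<Sum>b\<in>Basis. D b *\<^sub>R b)"
  by (simp add: grad_def frechet_derivative_at[symmetric])

lemma divergence_eq_of_has_derivative:
  "(\<phi> has_derivative D) (at X) \<Longrightarrow> divergence \<phi> X = (\<Sum>b\<in>Basis. D b \<bullet> b)"
  by (simp add: divergence_def frechet_derivative_at[symmetric])

lemma has_derivative_grad:
  fixes f :: "'a::euclidean_space \<Rightarrow> real"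
  assumes "f differentiable (at X)"
  shows "(f has_derivative (\<lambda>h. grad f X \<bullet> h)) (at X)"
proof -
  obtain D where D: "(f has_derivative D) (at X)" using assms by (auto simp: differentiable_def)
  have "D h = grad f X \<bullet> h" for h
  proof -
    have "D h = D (\<Sum>b\<in>Basis. (h \<bullet> b) *\<^sub>R b)" by (simp add: euclidean_representation)
    also have "\<dots> = (\<Sum>b\<in>Basis. (h \<bullet> b) * D b)"
      using has_derivative_linear[OF D] by (simp add: linear_sum linear_scale)
    also have "\<dots> = grad f X \<bullet> h"
      by (simp add: grad_eq_of_has_derivative[OF D] inner_sum_right inner_commute mult.commute)
    finally show ?thesis .
  qed
  then have "D = (\<lambda>h. grad f X \<bullet> h)" by auto
  with D show ?thesis by simp
qed

lemma grad_eq_0_if_vanishes_on_open: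
  assumes "(f has_derivative (\<lambda>h. grad f X \<bullet> h)) (at X)"
    and "open S" "X \<in> S" "\<And>Y. Y \<in> S \<Longrightarrow> f Y = 0"
  shows "grad f X = 0"
proof -
  have "(f has_derivative (\<lambda>h. 0)) (at X)"
    by (rule has_derivative_transform_within_open[OF has_derivative_const assms(2,3)])
       (use assms(4) in auto)
  from has_derivative_unique[OF assms(1) this] have "grad f X \<bullet> grad f X = 0" by metis
  then show ?thesis by simp
qed

lemma smooth_on_has_derivative_grad:
  "smooth_on S f \<Longrightarrow> X \<in> S \<Longrightarrow> (f has_derivative (\<lambda>h. grad f X \<bullet> h)) (at X)"
  unfolding smooth_on_def by (rule has_derivative_grad) (metis empty_set empty_subsetI iderv.simps(1))

lemma smooth_on_continuous_grad:
  assumes "smooth_on S f" "open S"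
  shows "continuous_on S (grad f)"
proof -
  have "continuous_on S (\<lambda>X. frechet_derivative f (at X) b)" if "b \<in> Basis" for b
  proof -
    have "iderv f [b] differentiable (at X)" if "X \<in> S" for X
      using assms(1) \<open>b \<in> Basis\<close> \<open>X \<in> S\<close> unfolding smooth_on_def
      by (metis empty_subsetI insert_subset list.set)
    then have "isCont (\<lambda>X. frechet_derivative f (at X) b) X" if "X \<in> S" for X
      using that by (simp add: differentiable_imp_continuous_within)
    then show ?thesis by (simp add: continuous_at_imp_continuous_on)
  qed
  then show ?thesis unfolding grad_def[abs_def] by (intro continuous_intros)
qed

lemma norm_grad_bounded:
  fixes f :: "'a::euclidean_space \<Rightarrow> real"
  assumes "\<And>b. b \<in> Basis \<Longrightarrow> \<exists>C. \<forall>X\<in>S. \<bar>frechet_derivative f (at X) b\<bar> \<le> C"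
  obtains C where "0 \<le> C" "\<And>X. X \<in> S \<Longrightarrow> norm (grad f X) \<le> C"
proof -
  obtain C where C: "\<And>b X. b \<in> Basis \<Longrightarrow> X \<in> S \<Longrightarrow> \<bar>frechet_derivative f (at X) b\<bar> \<le> C b"
    using assms by metis
  show ?thesis
  proof (rule that[of "\<Sum>b\<in>Basis. \<bar>C b\<bar>"])
    fix X assume X: "X \<in> S"
    have "norm (grad f X) \<le> (\<Sum>b\<in>Basis. norm (frechet_derivative f (at X) b *\<^sub>R b))"
      unfolding grad_def by (rule norm_sum)
    also have "\<dots> \<le> (\<Sum>b\<in>Basis. \<bar>C b\<bar>)"
      using C[OF _ X] by (intro sum_mono) force
    finally show "norm (grad f X) \<le> (\<Sum>b\<in>Basis. \<bar>C b\<bar>)" .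
  qed (simp add: sum_nonneg)
qed

lemma norm_grad_bounded_if_scaled_derivative_bounds:
  fixes f :: "'a::euclidean_space \<Rightarrow> real"
  assumes pos: "\<And>X. X \<in> S \<Longrightarrow> 0 < f X"
    and bounds: "\<forall>vs. set vs \<subseteq> Basis \<longrightarrow>
      (\<exists>C. \<forall>X\<in>S. \<bar>iderv f vs X\<bar> \<le> C * f X powr (1 - real (length vs)))"
  obtains C where "0 \<le> C" "\<And>X. X \<in> S \<Longrightarrow> norm (grad f X) \<le> C"
proof (rule norm_grad_bounded)
  fix b :: 'a assume "b \<in> Basis"
  then have "set [b] \<subseteq> Basis" by simp
  then obtain C where C: "\<forall>X\<in>S. \<bar>iderv f [b] X\<bar> \<le> C * f X powr (1 - real (length [b]))"
    using bounds by blast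
  have "\<bar>frechet_derivative f (at X) b\<bar> \<le> C" if "X \<in> S" for X
  proof -
    have "\<bar>iderv f [b] X\<bar> \<le> C * f X powr (1 - real (length [b]))" using C that by blast
    then show ?thesis using pos[OF that] by simp
  qed
  then show "\<exists>C. \<forall>X\<in>S. \<bar>frechet_derivative f (at X) b\<bar> \<le> C" by blast
qed (use that in blast)

section \<open>Auxiliary estimates\<close>

lemma powr_minus_mult_power:
  fixes a c d :: real
  assumes "0 < a" "0 < d"
  shows "(a * d) powr (- real n) * (c * d) ^ n = (c / a) ^ n"
proof -
  have "(a * d) powr (- real n) * (c * d) ^ n = inverse ((a * d) ^ n) * (c * d) ^ n"
    using assms by (simp add: powr_minus powr_realpow)
  also have "\<dots> = ((c * d) / (a * d)) ^ n"
    by (simp only: divide_inverse_commute[symmetric] power_divide)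
  also have "(c * d) / (a * d) = c / a" using assms by simp
  finally show ?thesis .
qed

lemma integrable_pair_dominated:
  fixes f :: "'a::euclidean_space \<Rightarrow> 'b::euclidean_space \<Rightarrow> real"
  assumes f: "(\<lambda>(x, y). f x y) \<in> borel_measurable (lborel \<Otimes>\<^sub>M lborel)"
    and A: "compact A" and g: "integrable lborel g"
    and bound: "\<And>x y. \<bar>f x y\<bar> \<le> C * (indicator A x * \<bar>g y\<bar>)"
  shows "integrable (lborel \<Otimes>\<^sub>M lborel) (\<lambda>(x, y). f x y)"
proof (rule Bochner_Integration.integrable_bound[OF _ f])
  have [measurable]: "A \<in> sets lborel" using A by (simp add: compact_imp_closed borel_closed)
  have [measurable]: "g \<in> borel_measurable lborel" using g by (rule borel_measurable_integrable)
  show "integrable (lborel \<Otimes>\<^sub>M lborel) (\<lambda>(x, y). C * (indicator A x * \<bar>g y\<bar>))"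
  proof (rule lborel_pair.Fubini_integrable)
    have "integrable lborel (\<lambda>x. \<bar>C\<bar> * (\<integral>y. \<bar>g y\<bar> \<partial>lborel) * indicator A x)"
      using A by (intro integrable_mult_right integrable_real_indicator emeasure_compact_finite)
         (auto simp: compact_imp_closed borel_closed)
    then show "integrable lborel (\<lambda>x. \<integral>y. norm ((\<lambda>(x, y). C * (indicator A x * \<bar>g y\<bar>)) (x, y)) \<partial>lborel)"
      by (simp add: abs_mult mult_ac)
  qed (use g in \<open>auto simp: case_prod_beta'\<close>)
  show "AE q in lborel \<Otimes>\<^sub>M lborel.
      norm ((\<lambda>(x, y). f x y) q) \<le> norm ((\<lambda>(x, y). C * (indicator A x * \<bar>g y\<bar>)) q)"
  proof (rule AE_I2)
    fix q :: "'a \<times> 'b"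
    show "norm ((\<lambda>(x, y). f x y) q) \<le> norm ((\<lambda>(x, y). C * (indicator A x * \<bar>g y\<bar>)) q)"
      using bound[of "fst q" "snd q"] abs_ge_self[of "C * (indicator A (fst q) * \<bar>g (snd q)\<bar>)"]
      by (simp add: case_prod_beta')
  qed
qed

lemma nn_integral_open_le_if_compact_le:
  fixes f :: "'a::euclidean_space \<Rightarrow> ennreal"
  assumes U: "open U" and f: "(\<lambda>x. f x * indicator U x) \<in> borel_measurable lborel"
    and compact_le: "\<And>K. compact K \<Longrightarrow> K \<subseteq> U \<Longrightarrow> (\<integral>\<^sup>+x. f x * indicator K x \<partial>lborel) \<le> c"
  shows "(\<integral>\<^sup>+x. f x * indicator U x \<partial>lborel) \<le> c"
proof -
  obtain C where C: "\<And>n. compact (C n)" "\<And>n. C n \<subseteq> U" "\<And>n. C n \<subseteq> interior (C (Suc n))"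
    "\<Union>(range C) = U"
    using open_Union_compact_subsets[OF U] by metis
  have "incseq C" using C(3) interior_subset by (intro incseq_SucI) blast
  have eq: "f x * indicator U x = (SUP n. f x * indicator (C n) x)" for x
  proof (cases "x \<in> U")
    case True
    then obtain n where "x \<in> C n" using C(4) by blast
    then have "x \<in> C m" if "n \<le> m" for m using \<open>incseq C\<close> that by (auto simp: incseq_def)
    then have "(SUP m. f x * indicator (C m) x) = f x"
      using \<open>x \<in> C n\<close> by (intro antisym SUP_least SUP_upper2[of n]) (auto simp: indicator_def)
    then show ?thesis using True by simp
  next
    case False
    then have "x \<notin> C n" for n using C(2) by blast
    then show ?thesis using False by simp
  qed
  have meas: "(\<lambda>x. f x * indicator (C n) x) \<in> borel_measurable lborel" for n
  proof -
    have "(\<lambda>x. f x * indicator (C n) x) = (\<lambda>x. f x * indicator U x * indicator (C n) x)"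
      using C(2) by (auto simp: fun_eq_iff indicator_def)
    then show ?thesis
      using f C(1) by (simp add: compact_imp_closed borel_closed)
  qed
  have "incseq (\<lambda>n x. f x * indicator (C n) x)"
    using \<open>incseq C\<close> by (auto simp: incseq_def le_fun_def intro!: mult_left_mono split: split_indicator)
  then have "(\<integral>\<^sup>+x. f x * indicator U x \<partial>lborel) = (SUP n. \<integral>\<^sup>+x. f x * indicator (C n) x \<partial>lborel)"
    unfolding eq by (intro nn_integral_monotone_convergence_SUP meas)
  also have "\<dots> \<le> c" using C(1,2) compact_le by (intro SUP_least) blast
  finally show ?thesis .
qed

lemma ennreal_divide_le_doubling:
  fixes r K :: real
  assumes I: "I \<le> ennreal K * T" and T: "T / ennreal ((2 * r) ^ n) \<le> c" and r: "0 < r" and K: "0 \<le> K"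
  shows "I / ennreal (r ^ n) \<le> ennreal (K * 2 ^ n) * c"
proof -
  have "ennreal K * inverse (ennreal (r ^ n)) = ennreal (K * 2 ^ n) * inverse (ennreal ((2 * r) ^ n))"
  proof -
    have "K * inverse (r ^ n) = K * 2 ^ n * inverse ((2 * r) ^ n)"
      using r by (simp add: power_mult_distrib field_simps)
    then show ?thesis using r K by (simp add: inverse_ennreal ennreal_mult'[symmetric])
  qed
  then have "I / ennreal (r ^ n) \<le> ennreal (K * 2 ^ n) * (T / ennreal ((2 * r) ^ n))"
    using divide_right_mono_ennreal[OF I] unfolding divide_ennreal_def by (metis mult.assoc mult.commute)
  also have "\<dots> \<le> ennreal (K * 2 ^ n) * c" by (rule mult_left_mono[OF T]) simp
  finally show ?thesis .
qed

section \<open>The regularizing kernel\<close>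

locale C1_regularization =
  fixes E :: "'a::euclidean_space set" and \<beta> \<zeta> :: "'a \<Rightarrow> real" and m1 m2 C\<beta> :: real
  assumes closed_E: "closed E" and m1_pos: "0 < m1" and m2_pos: "0 < m2"
    and beta_pos: "\<And>X. X \<notin> E \<Longrightarrow> 0 < \<beta> X"
    and beta_lower: "\<And>X. X \<notin> E \<Longrightarrow> m1 * infdist X E \<le> \<beta> X"
    and beta_upper: "\<And>X. X \<notin> E \<Longrightarrow> \<beta> X \<le> m2 * infdist X E"
    and has_derivative_beta: "\<And>X. X \<notin> E \<Longrightarrow> (\<beta> has_derivative (\<lambda>h. grad \<beta> X \<bullet> h)) (at X)"
    and continuous_grad_beta: "continuous_on (UNIV - E) (grad \<beta>)"
    and norm_grad_beta_le: "\<And>X. X \<notin> E \<Longrightarrow> norm (grad \<beta> X) \<le> C\<beta>"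
    and C\<beta>_nonneg: "0 \<le> C\<beta>"
    and has_derivative_zeta: "\<And>Z. (\<zeta> has_derivative (\<lambda>h. grad \<zeta> Z \<bullet> h)) (at Z)"
    and continuous_grad_zeta: "continuous_on UNIV (grad \<zeta>)"
    and abs_zeta_le_1: "\<And>Z. \<bar>\<zeta> Z\<bar> \<le> 1"
    and zeta_support: "\<And>Z. \<zeta> Z \<noteq> 0 \<Longrightarrow> norm Z < 1 / (2 * m2)"
begin

abbreviation \<delta> :: "'a \<Rightarrow> real" where "\<delta> X \<equiv> infdist X E"

abbreviation \<rho> :: real where "\<rho> \<equiv> 1 / (2 * m2)"

lemma E_nonempty: "E \<noteq> {}"
proof
  assume "E = {}"
  then have "0 < \<beta> 0" "\<beta> 0 \<le> m2 * \<delta> 0" using beta_pos beta_upper by auto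
  then show False using \<open>E = {}\<close> by (simp add: infdist_def)
qed

lemma open_complement: "open (UNIV - E)"
  using closed_E by (simp add: open_Diff)

lemma infdist_pos: "X \<notin> E \<Longrightarrow> 0 < \<delta> X"
  using closed_E E_nonempty by (simp add: infdist_pos_not_in_closed)

lemma not_in_E_if_infdist_pos: "0 < \<delta> X \<Longrightarrow> X \<notin> E"
  by (auto simp: infdist_zero)

lemma continuous_on_beta: "continuous_on (UNIV - E) \<beta>"
  using has_derivative_beta has_derivative_continuous
  by (metis DiffD2 continuous_at_imp_continuous_on)

lemma continuous_on_zeta: "continuous_on UNIV \<zeta>"
  using has_derivative_zeta has_derivative_continuous
  by (metis continuous_at_imp_continuous_on)

lemma zeta_eq_0: "\<rho> \<le> norm Z \<Longrightarrow> \<zeta> Z = 0"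
  using zeta_support by fastforce

lemma grad_zeta_eq_0: "\<rho> < norm Z \<Longrightarrow> grad \<zeta> Z = 0"
  by (rule grad_eq_0_if_vanishes_on_open[OF has_derivative_zeta, of "{W. \<rho> < norm W}"])
     (auto intro: open_Collect_less continuous_intros zeta_eq_0)

definition rescaled :: "'a \<Rightarrow> 'a \<Rightarrow> 'a" where
  "rescaled X Y = (1 / \<beta> X) *\<^sub>R (X - Y)"

definition kernel :: "'a \<Rightarrow> 'a \<Rightarrow> real" where
  "kernel X Y = \<beta> X powr (- real DIM('a)) * \<zeta> (rescaled X Y)"

definition kernel_grad :: "'a \<Rightarrow> 'a \<Rightarrow> 'a" where
  "kernel_grad X Y = \<beta> X powr (- real DIM('a) - 1) *\<^sub>R (grad \<zeta> (rescaled X Y)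
     - (real DIM('a) * \<zeta> (rescaled X Y) + grad \<zeta> (rescaled X Y) \<bullet> rescaled X Y) *\<^sub>R grad \<beta> X)"

text \<open>\<open>flux b X Y c\<close> is the \<open>c\<close>-th component of the vector field
  \<open>W\<^sub>b(X, Y) = \<beta>(X)^(-n-1) \<zeta>(Z) (\<partial>\<^sub>b\<beta>(X) (X - Y) - \<beta>(X) b)\<close>, \<open>Z = (X - Y) / \<beta>(X)\<close>, whose
  divergence in \<open>Y\<close> is \<open>\<partial>\<^sub>b\<close> of the kernel in \<open>X\<close>; \<open>flux_grad b X Y c\<close> is the
  \<open>Y\<close>-gradient of that component.\<close>

definition flux :: "'a \<Rightarrow> 'a \<Rightarrow> 'a \<Rightarrow> 'a \<Rightarrow> real" where
  "flux b X Y c = - kernel X Y * (b \<bullet> c)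
     + (grad \<beta> X \<bullet> b) * \<beta> X powr (- real DIM('a)) * \<zeta> (rescaled X Y) * (rescaled X Y \<bullet> c)"

definition flux_grad :: "'a \<Rightarrow> 'a \<Rightarrow> 'a \<Rightarrow> 'a \<Rightarrow> 'a" where
  "flux_grad b X Y c = \<beta> X powr (- real DIM('a) - 1) *\<^sub>R ((b \<bullet> c) *\<^sub>R grad \<zeta> (rescaled X Y)
     - (grad \<beta> X \<bullet> b) *\<^sub>R ((rescaled X Y \<bullet> c) *\<^sub>R grad \<zeta> (rescaled X Y) + \<zeta> (rescaled X Y) *\<^sub>R c))"

lemma regularize_eq: "regularize \<beta> \<zeta> G0 X = (\<integral>Y. kernel X Y * G0 Y \<partial>lborel)"
  unfolding regularize_def kernel_def rescaled_def by simp

lemma has_derivative_kernel: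
  assumes X: "X \<notin> E"
  shows "((\<lambda>X. kernel X Y) has_derivative (\<lambda>h. kernel_grad X Y \<bullet> h)) (at X)"
proof -
  have bX: "\<beta> X > 0" using beta_pos X .
  have d1: "((\<lambda>X. \<beta> X powr (- real DIM('a))) has_derivative
      (\<lambda>h. \<beta> X powr (- real DIM('a)) * ((\<lambda>h. 0) h * ln (\<beta> X) + (grad \<beta> X \<bullet> h) * (- real DIM('a)) / \<beta> X))) (at X)"
    by (rule has_derivative_powr[OF has_derivative_beta[OF X] has_derivative_const bX]) simp
  have d2: "((\<lambda>X. rescaled X Y) has_derivative
      (\<lambda>h. (1 / \<beta> X) *\<^sub>R h + (- (grad \<beta> X \<bullet> h) / (\<beta> X)\<^sup>2) *\<^sub>R (X - Y))) (at X)"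
  proof -
    have a: "((\<lambda>X. 1 / \<beta> X) has_derivative (\<lambda>h. (0 * \<beta> X - 1 * (grad \<beta> X \<bullet> h)) / (\<beta> X * \<beta> X))) (at X)"
      by (rule has_derivative_divide'[OF has_derivative_const has_derivative_beta[OF X]]) (use bX in simp)
    have b: "((\<lambda>X. X - Y) has_derivative (\<lambda>h. h - 0)) (at X)"
      by (intro has_derivative_diff has_derivative_ident has_derivative_const)
    show ?thesis unfolding rescaled_def
      by (rule has_derivative_eq_rhs[OF has_derivative_scaleR[OF a b]]) (auto simp: power2_eq_square)
  qed
  have d3: "((\<lambda>X. \<zeta> (rescaled X Y)) has_derivative
      (\<lambda>h. grad \<zeta> (rescaled X Y) \<bullet> ((1 / \<beta> X) *\<^sub>R h + (- (grad \<beta> X \<bullet> h) / (\<beta> X)\<^sup>2) *\<^sub>R (X - Y)))) (at X)"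
    using has_derivative_compose[OF d2 has_derivative_zeta] by (simp add: o_def)
  have pw: "\<beta> X powr (- real DIM('a) - 1) = \<beta> X powr (- real DIM('a)) / \<beta> X"
    using bX by (simp add: powr_diff)
  have XY: "X - Y = \<beta> X *\<^sub>R rescaled X Y" using bX by (simp add: rescaled_def)
  show ?thesis unfolding kernel_def
    by (rule has_derivative_eq_rhs[OF has_derivative_mult[OF d1 d3]], rule ext)
       (use bX in \<open>simp add: kernel_grad_def pw XY inner_add_right inner_diff_left inner_diff_right
         inner_scaleR_left inner_scaleR_right power2_eq_square field_simps inner_commute\<close>)
qed

lemma has_derivative_flux:
  assumes X: "X \<notin> E"
  shows "((\<lambda>Y. flux b X Y c) has_derivative (\<lambda>h. flux_grad b X Y c \<bullet> h)) (at Y)"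
proof -
  have bX: "\<beta> X > 0" using beta_pos X .
  have pw: "\<beta> X powr (- real DIM('a) - 1) = \<beta> X powr (- real DIM('a)) / \<beta> X"
    using bX by (simp add: powr_diff)
  have dZ: "((\<lambda>Y. rescaled X Y) has_derivative (\<lambda>h. (1 / \<beta> X) *\<^sub>R (0 - h))) (at Y)"
    unfolding rescaled_def
    by (intro has_derivative_scaleR_right has_derivative_diff has_derivative_ident has_derivative_const)
  have dzZ: "((\<lambda>Y. \<zeta> (rescaled X Y)) has_derivative
      (\<lambda>h. grad \<zeta> (rescaled X Y) \<bullet> ((1 / \<beta> X) *\<^sub>R (0 - h)))) (at Y)"
    using has_derivative_compose[OF dZ has_derivative_zeta] by (simp add: o_def)
  have dZc: "((\<lambda>Y. rescaled X Y \<bullet> c) has_derivative (\<lambda>h. ((1 / \<beta> X) *\<^sub>R (0 - h)) \<bullet> c)) (at Y)"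
    by (rule has_derivative_inner_left[OF dZ])
  have D1: "((\<lambda>Y. - (\<beta> X powr (- real DIM('a)) * \<zeta> (rescaled X Y)) * (b \<bullet> c)) has_derivative
      (\<lambda>h. - (\<beta> X powr (- real DIM('a)) * (grad \<zeta> (rescaled X Y) \<bullet> ((1 / \<beta> X) *\<^sub>R (0 - h)))) * (b \<bullet> c))) (at Y)"
    by (intro has_derivative_mult_left has_derivative_minus has_derivative_mult_right dzZ)
  have D2: "((\<lambda>Y. (grad \<beta> X \<bullet> b) * \<beta> X powr (- real DIM('a)) * \<zeta> (rescaled X Y)) has_derivative
      (\<lambda>h. (grad \<beta> X \<bullet> b) * \<beta> X powr (- real DIM('a)) * (grad \<zeta> (rescaled X Y) \<bullet> ((1 / \<beta> X) *\<^sub>R (0 - h))))) (at Y)"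
    by (intro has_derivative_mult_right dzZ)
  show ?thesis unfolding flux_def kernel_def
  proof (rule has_derivative_eq_rhs[OF has_derivative_add[OF D1 has_derivative_mult[OF D2 dZc]]], rule ext)
    fix h
    have i1: "grad \<zeta> (rescaled X Y) \<bullet> ((1 / \<beta> X) *\<^sub>R (0 - h)) = - (grad \<zeta> (rescaled X Y) \<bullet> h) / \<beta> X"
      by (simp add: inner_scaleR_right inner_diff_right)
    have i2: "((1 / \<beta> X) *\<^sub>R (0 - h)) \<bullet> c = - (c \<bullet> h) / \<beta> X"
      by (simp add: inner_scaleR_left inner_diff_left inner_commute)
    have i3: "flux_grad b X Y c \<bullet> h = \<beta> X powr (- real DIM('a)) / \<beta> X *
        ((b \<bullet> c) * (grad \<zeta> (rescaled X Y) \<bullet> h) - (grad \<beta> X \<bullet> b)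
          * ((rescaled X Y \<bullet> c) * (grad \<zeta> (rescaled X Y) \<bullet> h) + \<zeta> (rescaled X Y) * (c \<bullet> h)))"
      unfolding flux_grad_def pw by (simp add: inner_scaleR_left inner_diff_left inner_add_left)
    show "- (\<beta> X powr (- real DIM('a)) * (grad \<zeta> (rescaled X Y) \<bullet> ((1 / \<beta> X) *\<^sub>R (0 - h)))) * (b \<bullet> c) +
        ((grad \<beta> X \<bullet> b) * \<beta> X powr (- real DIM('a)) * \<zeta> (rescaled X Y) * (((1 / \<beta> X) *\<^sub>R (0 - h)) \<bullet> c) +
         (grad \<beta> X \<bullet> b) * \<beta> X powr (- real DIM('a)) * (grad \<zeta> (rescaled X Y) \<bullet> ((1 / \<beta> X) *\<^sub>R (0 - h)))
           * (rescaled X Y \<bullet> c))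
      = flux_grad b X Y c \<bullet> h"
      unfolding i1 i2 i3 using bX by (simp add: field_simps)
  qed
qed

lemma sum_flux_grad_eq_kernel_grad:
  "b \<in> Basis \<Longrightarrow> (\<Sum>c\<in>Basis. flux_grad b X Y c \<bullet> c) = kernel_grad X Y \<bullet> b"
proof -
  assume b: "b \<in> Basis"
  let ?Z = "rescaled X Y" and ?P = "\<beta> X powr (- real DIM('a) - 1)"
  have "flux_grad b X Y c \<bullet> c = ?P * ((b \<bullet> c) * (grad \<zeta> ?Z \<bullet> c)
      - (grad \<beta> X \<bullet> b) * ((?Z \<bullet> c) * (grad \<zeta> ?Z \<bullet> c) + \<zeta> ?Z * (c \<bullet> c)))" for c
    unfolding flux_grad_def by (simp add: inner_scaleR_left inner_diff_left inner_add_left)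
  then have "(\<Sum>c\<in>Basis. flux_grad b X Y c \<bullet> c) = ?P * ((\<Sum>c\<in>Basis. (b \<bullet> c) * (grad \<zeta> ?Z \<bullet> c))
      - (grad \<beta> X \<bullet> b) * ((\<Sum>c\<in>Basis. (?Z \<bullet> c) * (grad \<zeta> ?Z \<bullet> c))
        + \<zeta> ?Z * (\<Sum>c\<in>(Basis::'a set). c \<bullet> c)))"
    by (simp add: sum_subtractf sum.distrib sum_distrib_left right_diff_distrib distrib_left mult.assoc)
  also have "\<dots> = kernel_grad X Y \<bullet> b"
    using euclidean_inner[of b "grad \<zeta> ?Z"] euclidean_inner[of ?Z "grad \<zeta> ?Z"]
    by (simp add: kernel_grad_def inner_commute inner_diff_left inner_scaleR_left inner_add_left
        algebra_simps)
  finally show ?thesis .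
qed

lemma
  assumes "X \<notin> E" "\<delta> X / 2 < dist X Y"
  shows kernel_eq_0_if_far: "kernel X Y = 0"
    and kernel_grad_eq_0_if_far: "kernel_grad X Y = 0"
    and flux_eq_0_if_far: "flux b X Y c = 0"
proof -
  have bX: "\<beta> X > 0" using beta_pos assms(1) .
  have "\<rho> * \<beta> X \<le> \<rho> * (m2 * \<delta> X)"
    using beta_upper[OF assms(1)] m2_pos by (intro mult_left_mono) auto
  also have "\<dots> < norm (X - Y)" using assms(2) m2_pos by (simp add: dist_norm)
  finally have "\<rho> < norm (X - Y) / \<beta> X" using bX by (simp add: pos_less_divide_eq)
  moreover have "norm (rescaled X Y) = norm (X - Y) / \<beta> X"
    unfolding rescaled_def norm_scaleR using bX by simp
  ultimately have "\<rho> < norm (rescaled X Y)" by simp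
  then have "\<zeta> (rescaled X Y) = 0" "grad \<zeta> (rescaled X Y) = 0"
    using zeta_eq_0 grad_zeta_eq_0 by auto
  then show "kernel X Y = 0" "kernel_grad X Y = 0" "flux b X Y c = 0"
    by (simp_all add: kernel_def kernel_grad_def flux_def)
qed

lemma continuous_on_rescaled: "continuous_on ((UNIV - E) \<times> UNIV) (\<lambda>p. rescaled (fst p) (snd p))"
  unfolding rescaled_def
  by (intro continuous_intros continuous_on_compose2[OF continuous_on_beta]) (auto dest: beta_pos)

lemma continuous_on_beta_powr: "continuous_on ((UNIV - E) \<times> UNIV) (\<lambda>p. \<beta> (fst p) powr a)"
  by (intro continuous_intros continuous_on_compose2[OF continuous_on_beta]) (force dest: beta_pos)+

lemma continuous_on_grad_beta_fst: "continuous_on ((UNIV - E) \<times> UNIV) (\<lambda>p. grad \<beta> (fst p))"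
  by (rule continuous_on_compose2[OF continuous_grad_beta]) (force intro: continuous_intros)+

lemma continuous_on_zeta_rescaled:
  "continuous_on ((UNIV - E) \<times> UNIV) (\<lambda>p. \<zeta> (rescaled (fst p) (snd p)))"
  by (rule continuous_on_compose2[OF continuous_on_zeta continuous_on_rescaled]) simp

lemma continuous_on_grad_zeta_rescaled:
  "continuous_on ((UNIV - E) \<times> UNIV) (\<lambda>p. grad \<zeta> (rescaled (fst p) (snd p)))"
  by (rule continuous_on_compose2[OF continuous_grad_zeta continuous_on_rescaled]) simp

lemmas continuous_on_kernel_parts = continuous_on_rescaled continuous_on_beta_powr
  continuous_on_grad_beta_fst continuous_on_zeta_rescaled continuous_on_grad_zeta_rescaled

lemma
  shows continuous_on_kernel: "continuous_on ((UNIV - E) \<times> UNIV) (\<lambda>(X, Y). kernel X Y)"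
    and continuous_on_kernel_grad: "continuous_on ((UNIV - E) \<times> UNIV) (\<lambda>(X, Y). kernel_grad X Y)"
    and continuous_on_flux: "continuous_on ((UNIV - E) \<times> UNIV) (\<lambda>(X, Y). flux b X Y c)"
    and continuous_on_flux_grad: "continuous_on ((UNIV - E) \<times> UNIV) (\<lambda>(X, Y). flux_grad b X Y c)"
  unfolding case_prod_beta' kernel_def kernel_grad_def flux_def flux_grad_def
  by (intro continuous_intros continuous_on_kernel_parts)+

section \<open>Differentiating the regularization\<close>

lemma local_window:
  assumes X0: "X0 \<notin> E"
  obtains U S where "open U" "X0 \<in> U" "U \<subseteq> UNIV - E" "compact S" "S \<subseteq> UNIV - E"
    "\<And>X Y. X \<in> U \<Longrightarrow> dist X Y \<le> \<delta> X / 2 \<Longrightarrow> Y \<in> S"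
proof
  define d where "d = \<delta> X0"
  have d: "d > 0" using infdist_pos[OF X0] by (simp add: d_def)
  show "open (ball X0 (d / 4))" "X0 \<in> ball X0 (d / 4)" "compact (cball X0 (7 / 8 * d))"
    using d by auto
  have "\<delta> Y > 0" if "dist X0 Y < d" for Y
    using infdist_triangle[of X0 E Y] that by (simp add: d_def)
  then show "ball X0 (d / 4) \<subseteq> UNIV - E" "cball X0 (7 / 8 * d) \<subseteq> UNIV - E"
    using d not_in_E_if_infdist_pos by force+
  fix X Y assume X: "X \<in> ball X0 (d / 4)" and XY: "dist X Y \<le> \<delta> X / 2"
  have "\<delta> X \<le> 5 / 4 * d"
    using infdist_triangle[of X E X0] X by (simp add: d_def dist_commute)
  then show "Y \<in> cball X0 (7 / 8 * d)"
    using dist_triangle[of X0 Y X] X XY by simp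
qed

lemma integral_localize:
  fixes F G0 :: "'a \<Rightarrow> real"
  assumes "\<And>Y. dist X Y \<le> \<delta> X / 2 \<Longrightarrow> Y \<in> S" "\<And>Y. \<delta> X / 2 < dist X Y \<Longrightarrow> F Y = 0"
  shows "(\<integral>Y. F Y * G0 Y \<partial>lborel) = (\<integral>Y. F Y * (indicator S Y * G0 Y) \<partial>lborel)"
proof (rule Bochner_Integration.integral_cong[OF refl])
  fix Y show "F Y * G0 Y = F Y * (indicator S Y * G0 Y)"
  proof (cases "Y \<in> S")
    case False
    then have "\<delta> X / 2 < dist X Y" using assms(1) by force
    then show ?thesis using assms(2) by simp
  qed simp
qed

lemma integrable_indicator_mult_loc_integrable:
  "loc_integrable (UNIV - E) G0 \<Longrightarrow> compact S \<Longrightarrow> S \<subseteq> UNIV - E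
    \<Longrightarrow> integrable lborel (\<lambda>Y. indicator S Y * G0 Y)"
  unfolding loc_integrable_def set_integrable_def by simp

lemma has_derivative_regularize:
  assumes G0: "loc_integrable (UNIV - E) G0" and X0: "X0 \<notin> E"
  shows "(regularize \<beta> \<zeta> G0 has_derivative
           (\<lambda>h. \<integral>Y. (kernel_grad X0 Y \<bullet> h) * G0 Y \<partial>lborel)) (at X0)"
proof -
  obtain U S where U: "open U" "X0 \<in> U" "U \<subseteq> UNIV - E" and S: "compact S" "S \<subseteq> UNIV - E"
    and near: "\<And>X Y. X \<in> U \<Longrightarrow> dist X Y \<le> \<delta> X / 2 \<Longrightarrow> Y \<in> S"
    using local_window[OF X0] by blast
  define g where "g Y = indicator S Y * G0 Y" for Y
  have g: "integrable lborel g"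
    unfolding g_def by (rule integrable_indicator_mult_loc_integrable[OF G0 S])
  have UE: "X \<notin> E" if "X \<in> U" for X using that U(3) by auto
  have "((\<lambda>X. \<integral>Y. kernel X Y * g Y \<partial>lborel) has_derivative
      (\<lambda>h. \<integral>Y. (kernel_grad X0 Y \<bullet> h) * g Y \<partial>lborel)) (at X0)"
  proof (rule has_derivative_parametric_integral[OF U(1) S(1) g _ _ _ _ U(2)])
    show "continuous_on (U \<times> S) (\<lambda>(X, Y). kernel_grad X Y)"
      by (rule continuous_on_subset[OF continuous_on_kernel_grad]) (use U(3) in auto)
    show "continuous_on S (kernel X)" if "X \<in> U" for X
      by (rule continuous_on_subset[OF continuous_on_slice_fst[OF continuous_on_kernel]])
         (use UE[OF that] in auto)
    show "((\<lambda>X. kernel X Y) has_derivative (\<lambda>h. kernel_grad X Y \<bullet> h)) (at X)" if "X \<in> U" for X Y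
      using has_derivative_kernel UE[OF that] .
  qed (simp add: g_def)
  moreover have "(\<integral>Y. (kernel_grad X0 Y \<bullet> h) * g Y \<partial>lborel)
      = (\<integral>Y. (kernel_grad X0 Y \<bullet> h) * G0 Y \<partial>lborel)" for h
    unfolding g_def using near[OF U(2)] kernel_grad_eq_0_if_far[OF X0]
    by (intro integral_localize[symmetric]) auto
  ultimately have D: "((\<lambda>X. \<integral>Y. kernel X Y * g Y \<partial>lborel) has_derivative
      (\<lambda>h. \<integral>Y. (kernel_grad X0 Y \<bullet> h) * G0 Y \<partial>lborel)) (at X0)"
    by simp
  show ?thesis
  proof (rule has_derivative_transform_within_open[OF D U(1,2)])
    fix X assume "X \<in> U"
    then show "(\<integral>Y. kernel X Y * g Y \<partial>lborel) = regularize \<beta> \<zeta> G0 X"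
      unfolding g_def regularize_eq using near kernel_eq_0_if_far[OF UE]
      by (intro integral_localize[symmetric]) auto
  qed
qed

lemma differentiable_regularize:
  "loc_integrable (UNIV - E) G0 \<Longrightarrow> X \<notin> E \<Longrightarrow> regularize \<beta> \<zeta> G0 differentiable (at X)"
  using has_derivative_regularize by (rule differentiableI)

definition partial_regularize :: "('a \<Rightarrow> real) \<Rightarrow> 'a \<Rightarrow> 'a \<Rightarrow> real" where
  "partial_regularize G0 b X = (\<integral>Y. (kernel_grad X Y \<bullet> b) * G0 Y \<partial>lborel)"

lemma grad_regularize:
  "loc_integrable (UNIV - E) G0 \<Longrightarrow> X \<notin> E
    \<Longrightarrow> grad (regularize \<beta> \<zeta> G0) X = (\<Sum>b\<in>Basis. partial_regularize G0 b X *\<^sub>R b)"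
  by (simp add: grad_eq_of_has_derivative[OF has_derivative_regularize] partial_regularize_def)

lemma continuous_on_partial_regularize:
  assumes G0: "loc_integrable (UNIV - E) G0"
  shows "continuous_on (UNIV - E) (partial_regularize G0 b)"
  unfolding continuous_on_eq_continuous_at[OF open_complement]
proof
  fix X0 assume "X0 \<in> UNIV - E"
  then have X0: "X0 \<notin> E" by simp
  obtain U S where U: "open U" "X0 \<in> U" "U \<subseteq> UNIV - E" and S: "compact S" "S \<subseteq> UNIV - E"
    and near: "\<And>X Y. X \<in> U \<Longrightarrow> dist X Y \<le> \<delta> X / 2 \<Longrightarrow> Y \<in> S"
    using local_window[OF X0] by blast
  define g where "g Y = indicator S Y * G0 Y" for Y
  have g: "integrable lborel g"
    unfolding g_def by (rule integrable_indicator_mult_loc_integrable[OF G0 S])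
  have "continuous_on U (\<lambda>X. \<integral>Y. (kernel_grad X Y \<bullet> b) * g Y \<partial>lborel)"
  proof (rule continuous_on_parametric_integral[OF S(1) g])
    have "continuous_on (U \<times> S) (\<lambda>(X, Y). kernel_grad X Y)"
      by (rule continuous_on_subset[OF continuous_on_kernel_grad]) (use U(3) in auto)
    then show "continuous_on (U \<times> S) (\<lambda>(X, Y). kernel_grad X Y \<bullet> b)"
      by (simp add: case_prod_beta' continuous_intros)
  qed (simp add: g_def)
  moreover have "(\<integral>Y. (kernel_grad X Y \<bullet> b) * g Y \<partial>lborel) = partial_regularize G0 b X"
    if "X \<in> U" for X
    unfolding g_def partial_regularize_def using near[OF that] kernel_grad_eq_0_if_far that U(3)
    by (intro integral_localize[symmetric]) auto
  ultimately have "continuous_on U (partial_regularize G0 b)"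
    by (rule continuous_on_eq)
  then show "isCont (partial_regularize G0 b) X0"
    using U(1,2) continuous_on_eq_continuous_at by blast
qed

section \<open>The dual test field\<close>

definition shadow :: "'a set \<Rightarrow> 'a set" where
  "shadow A = {Y. \<exists>X\<in>A. dist X Y \<le> \<delta> X / 2}"

lemma shadow_subset_complement:
  assumes "A \<subseteq> UNIV - E"
  shows "shadow A \<subseteq> UNIV - E"
proof
  fix Y assume "Y \<in> shadow A"
  then obtain X where X: "X \<in> A" "dist X Y \<le> \<delta> X / 2" by (auto simp: shadow_def)
  then have "0 < \<delta> X" using assms infdist_pos by auto
  then have "0 < \<delta> Y" using infdist_triangle[of X E Y] X(2) by simp
  then show "Y \<in> UNIV - E" using not_in_E_if_infdist_pos by simp
qed

lemma shadow_subset_ball: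
  assumes "A \<subseteq> ball z r" "z \<in> E"
  shows "shadow A \<subseteq> ball z (2 * r)"
proof
  fix Y assume "Y \<in> shadow A"
  then obtain X where X: "X \<in> A" "dist X Y \<le> \<delta> X / 2" by (auto simp: shadow_def)
  have "\<delta> X \<le> dist X z" using assms(2) by (rule infdist_le)
  moreover have "dist X z < r" using X(1) assms(1) by (auto simp: dist_commute)
  ultimately have "dist z Y < 2 * r"
    using X(2) dist_triangle[of z Y X] dist_commute[of z X] zero_le_dist[of X z] by linarith
  then show "Y \<in> ball z (2 * r)" by simp
qed

lemma compact_shadow:
  assumes A: "compact A" "A \<subseteq> UNIV - E"
  shows "compact (shadow A)"
proof -
  define T where "T = (A \<times> (UNIV::'a set)) \<inter> {p. norm (snd p) \<le> \<delta> (fst p) / 2}"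
  have "closed T" unfolding T_def
    by (intro closed_Int closed_Times compact_imp_closed A closed_UNIV closed_Collect_le continuous_intros
        continuous_on_compose2[OF continuous_on_infdist[OF continuous_on_id]]) auto
  obtain e0 where e0: "e0 \<in> E" using E_nonempty by blast
  obtain R where R: "\<And>X. X \<in> A \<Longrightarrow> norm X \<le> R"
    using compact_imp_bounded[OF A(1)] bounded_iff by metis
  have "\<delta> X \<le> R + norm e0" if "X \<in> A" for X
    using infdist_le[OF e0, of X] norm_triangle_ineq4[of X e0] R[OF that] by (simp add: dist_norm)
  then have "T \<subseteq> cball 0 R \<times> cball 0 ((R + norm e0) / 2)"
    using R by (force simp: T_def)
  then have "bounded T" by (rule bounded_subset[rotated]) (intro bounded_Times bounded_cball)
  with \<open>closed T\<close> have "compact ((\<lambda>p. fst p + snd p) ` T)"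
    by (intro compact_continuous_image continuous_intros) (simp add: compact_eq_bounded_closed)
  also have "(\<lambda>p. fst p + snd p) ` T = shadow A"
  proof (rule set_eqI, rule iffI)
    fix Y assume "Y \<in> (\<lambda>p. fst p + snd p) ` T"
    then show "Y \<in> shadow A" by (force simp: T_def shadow_def dist_norm)
  next
    fix Y assume "Y \<in> shadow A"
    then obtain X where X: "X \<in> A" "dist X Y \<le> \<delta> X / 2" by (auto simp: shadow_def)
    then have "(X, Y - X) \<in> T" by (simp add: T_def dist_norm norm_minus_commute)
    then show "Y \<in> (\<lambda>p. fst p + snd p) ` T" by (rule rev_image_eqI) simp
  qed
  finally show ?thesis .
qed

definition flux_mass :: real where
  "flux_mass = (1 + C\<beta> * \<rho>) * (3 / m1) ^ DIM('a) * measure lborel (ball (0::'a) 1)"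

definition test_scale :: real where
  "test_scale = real DIM('a) * flux_mass"

lemma flux_mass_pos: "0 < flux_mass"
  unfolding flux_mass_def using C\<beta>_nonneg m1_pos m2_pos by (simp add: add_pos_nonneg)

lemma test_scale_pos: "0 < test_scale"
  unfolding test_scale_def using flux_mass_pos by simp

lemma abs_flux_le:
  assumes X: "X \<notin> E" and b: "b \<in> Basis" and c: "c \<in> Basis"
  shows "\<bar>flux b X Y c\<bar> \<le> (1 + C\<beta> * \<rho>) * \<beta> X powr (- real DIM('a))"
proof -
  let ?P = "\<beta> X powr (- real DIM('a))" and ?Z = "rescaled X Y"
  have eq: "flux b X Y c = ?P * \<zeta> ?Z * ((grad \<beta> X \<bullet> b) * (?Z \<bullet> c) - b \<bullet> c)"
    by (simp add: flux_def kernel_def algebra_simps)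
  have "\<bar>\<zeta> ?Z * ((grad \<beta> X \<bullet> b) * (?Z \<bullet> c) - b \<bullet> c)\<bar> \<le> 1 * (C\<beta> * \<rho> + 1)"
  proof (cases "\<zeta> ?Z = 0")
    case False
    have "\<bar>grad \<beta> X \<bullet> b\<bar> \<le> C\<beta>"
      using norm_grad_beta_le[OF X] Basis_le_norm[OF b] by (meson order_trans)
    moreover have "\<bar>?Z \<bullet> c\<bar> \<le> \<rho>"
      using zeta_support[OF False] Basis_le_norm[OF c] by (meson less_imp_le order_trans)
    ultimately have "\<bar>(grad \<beta> X \<bullet> b) * (?Z \<bullet> c)\<bar> \<le> C\<beta> * \<rho>"
      unfolding abs_mult by (rule mult_mono) (use C\<beta>_nonneg in auto)
    moreover have "\<bar>b \<bullet> c\<bar> \<le> 1" using b c by (auto simp: inner_Basis)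
    ultimately have "\<bar>(grad \<beta> X \<bullet> b) * (?Z \<bullet> c) - b \<bullet> c\<bar> \<le> C\<beta> * \<rho> + 1"
      using abs_triangle_ineq4[of "(grad \<beta> X \<bullet> b) * (?Z \<bullet> c)" "b \<bullet> c"] by linarith
    then show ?thesis
      unfolding abs_mult by (rule mult_mono[OF abs_zeta_le_1]) auto
  qed (use C\<beta>_nonneg m2_pos in simp)
  from mult_left_mono[OF this powr_ge_zero, of "\<beta> X" "- real DIM('a)"] show ?thesis
    unfolding eq mult.assoc abs_mult[of ?P] by (simp add: algebra_simps)
qed

lemma indicator_abs_flux_le:
  assumes A: "A \<subseteq> UNIV - E" and b: "b \<in> Basis" and c: "c \<in> Basis"
  shows "indicator A X * \<bar>flux b X Y c\<bar>
    \<le> (1 + C\<beta> * \<rho>) * ((2 / 3) * m1 * \<delta> Y) powr (- real DIM('a)) * indicator (ball Y (2 * \<delta> Y)) X"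
proof (cases "X \<in> A \<and> flux b X Y c \<noteq> 0")
  case True
  then have X: "X \<notin> E" using A by auto
  have near: "dist X Y \<le> \<delta> X / 2" using flux_eq_0_if_far[OF X] True by force
  have "\<delta> X \<le> 2 * \<delta> Y" "(2 / 3) * \<delta> Y \<le> \<delta> X"
    using infdist_triangle[of X E Y] infdist_triangle[of Y E X] near by (auto simp: dist_commute)
  moreover have "0 < \<delta> X" using infdist_pos[OF X] .
  ultimately have "X \<in> ball Y (2 * \<delta> Y)" "0 < (2 / 3) * m1 * \<delta> Y"
    using near m1_pos by (auto simp: dist_commute)
  moreover have "(2 / 3) * m1 * \<delta> Y \<le> \<beta> X"
  proof -
    have "m1 * ((2 / 3) * \<delta> Y) \<le> m1 * \<delta> X"
      by (rule mult_left_mono[OF \<open>(2 / 3) * \<delta> Y \<le> \<delta> X\<close>]) (use m1_pos in simp)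
    then show ?thesis using beta_lower[OF X] by simp
  qed
  ultimately have "\<beta> X powr (- real DIM('a)) \<le> ((2 / 3) * m1 * \<delta> Y) powr (- real DIM('a))"
    by (intro powr_mono2') auto
  moreover have "0 \<le> 1 + C\<beta> * \<rho>" using C\<beta>_nonneg m2_pos by simp
  ultimately have "\<bar>flux b X Y c\<bar> \<le> (1 + C\<beta> * \<rho>) * ((2 / 3) * m1 * \<delta> Y) powr (- real DIM('a))"
    using order_trans[OF abs_flux_le[OF X b c] mult_left_mono] by blast
  then show ?thesis using True \<open>X \<in> ball Y (2 * \<delta> Y)\<close> by simp
next
  case False
  then show ?thesis using C\<beta>_nonneg m2_pos by auto
qed

lemma integral_indicator_abs_flux_le:
  assumes A: "compact A" "A \<subseteq> UNIV - E" and b: "b \<in> Basis" and c: "c \<in> Basis"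
  shows "(\<integral>X. indicator A X * \<bar>flux b X Y c\<bar> \<partial>lborel) \<le> flux_mass"
proof -
  define d where "d = \<delta> Y"
  define Q where "Q = (1 + C\<beta> * \<rho>) * ((2 / 3) * m1 * d) powr (- real DIM('a))"
  have "(\<integral>X. indicator A X * \<bar>flux b X Y c\<bar> \<partial>lborel) \<le> (\<integral>X. Q * indicator (ball Y (2 * d)) X \<partial>lborel)"
  proof (rule integral_mono)
    show "integrable lborel (\<lambda>X. indicator A X * \<bar>flux b X Y c\<bar>)"
      using A by (intro integrable_indicator_mult_continuous continuous_intros continuous_on_subset[OF
          continuous_on_slice_snd[OF continuous_on_flux]]) auto
    show "integrable lborel (\<lambda>X. Q * indicator (ball Y (2 * d)) X)"
      by (intro integrable_mult_right integrable_real_indicator emeasure_lborel_ball_finite) simp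
    show "indicator A X * \<bar>flux b X Y c\<bar> \<le> Q * indicator (ball Y (2 * d)) X" for X
      using indicator_abs_flux_le[OF A(2) b c, of X Y] by (simp add: Q_def d_def)
  qed
  also have "\<dots> = Q * measure lborel (ball Y (2 * d))" by simp
  also have "\<dots> \<le> flux_mass"
  proof (cases "d = 0")
    case False
    then have d: "0 < d" using infdist_nonneg[of Y E] by (simp add: d_def)
    define V where "V = measure lborel (ball (0::'a) 1)"
    define P where "P = ((2 / 3) * m1 * d) powr (- real DIM('a))"
    have "2 / ((2 / 3) * m1) = 3 / m1" using m1_pos by (simp add: field_simps)
    then have pow: "P * (2 * d) ^ DIM('a) = (3 / m1) ^ DIM('a)"
      using powr_minus_mult_power[of "(2 / 3) * m1" d "DIM('a)" 2] d m1_pos by (simp add: P_def)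
    have "Q * measure lborel (ball Y (2 * d)) = (1 + C\<beta> * \<rho>) * (P * (2 * d) ^ DIM('a)) * V"
      using content_ball_conv_unit_ball[of "2 * d" Y] d by (simp add: Q_def P_def V_def)
    also have "\<dots> = flux_mass"
      unfolding pow by (simp add: flux_mass_def V_def)
    finally show ?thesis by simp
  qed (use flux_mass_pos in simp)
  finally show ?thesis .
qed

definition sign_weight :: "'a set \<Rightarrow> ('a \<Rightarrow> real) \<Rightarrow> 'a \<Rightarrow> real" where
  "sign_weight A p X = sgn (indicator A X * p X) / test_scale"

lemma sign_weight_eq_0: "X \<notin> A \<Longrightarrow> sign_weight A p X = 0"
  by (simp add: sign_weight_def)

lemma abs_sign_weight_le: "\<bar>sign_weight A p X\<bar> \<le> indicator A X / test_scale"
  using test_scale_pos by (cases "X \<in> A") (auto simp: sign_weight_def abs_sgn_eq divide_right_mono)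

lemma sign_weight_mult: "sign_weight A p X * p X = indicator A X * \<bar>p X\<bar> / test_scale"
  by (cases "X \<in> A") (auto simp: sign_weight_def sgn_mult_abs abs_sgn_eq sgn_if)

lemma borel_measurable_sign_weight:
  assumes "compact A" "continuous_on A p"
  shows "sign_weight A p \<in> borel_measurable lborel"
proof -
  have "(\<lambda>X. indicator A X *\<^sub>R p X) \<in> borel_measurable borel"
    using assms by (intro borel_measurable_continuous_on_indicator) (auto simp: compact_imp_closed borel_closed)
  then have "(\<lambda>X. indicator A X * p X) \<in> borel_measurable lborel" by simp
  then show ?thesis unfolding sign_weight_def[abs_def] by measurable
qed

lemma integrable_sign_weight:
  assumes "compact A" "continuous_on A p"
  shows "integrable lborel (sign_weight A p)"
proof (rule Bochner_Integration.integrable_bound[where f="\<lambda>X. indicator A X / test_scale"])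
  show "integrable lborel (\<lambda>X. indicator A X / test_scale)"
    using assms by (intro integrable_divide integrable_real_indicator emeasure_compact_finite)
       (auto simp: compact_imp_closed borel_closed)
  show "AE X in lborel. norm (sign_weight A p X) \<le> norm (indicator A X / test_scale)"
    using abs_sign_weight_le test_scale_pos by simp
qed (rule borel_measurable_sign_weight[OF assms])

definition dual_field :: "'a \<Rightarrow> 'a set \<Rightarrow> ('a \<Rightarrow> real) \<Rightarrow> 'a \<Rightarrow> 'a" where
  "dual_field b A p Y = (\<Sum>c\<in>Basis. (\<integral>X. flux b X Y c * sign_weight A p X \<partial>lborel) *\<^sub>R c)"

context
  fixes A :: "'a set" and p :: "'a \<Rightarrow> real"
  assumes A: "compact A" "A \<subseteq> UNIV - E" and p: "continuous_on A p"
begin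

lemma continuous_on_flux_grad_swapped: "continuous_on (UNIV \<times> A) (\<lambda>(Y, X). flux_grad b X Y c)"
  by (rule continuous_on_swap_args, rule continuous_on_subset[OF continuous_on_flux_grad]) (use A in auto)

lemma has_derivative_dual_field:
  "(dual_field b A p has_derivative
     (\<lambda>h. \<Sum>c\<in>Basis. (\<integral>X. (flux_grad b X Y c \<bullet> h) * sign_weight A p X \<partial>lborel) *\<^sub>R c)) (at Y)"
  unfolding dual_field_def[abs_def]
proof (intro has_derivative_sum has_derivative_scaleR_left)
  fix c
  show "((\<lambda>Y. \<integral>X. flux b X Y c * sign_weight A p X \<partial>lborel) has_derivative
      (\<lambda>h. \<integral>X. (flux_grad b X Y c \<bullet> h) * sign_weight A p X \<partial>lborel)) (at Y)"
  proof (rule has_derivative_parametric_integral[OF open_UNIV A(1) integrable_sign_weight[OF A(1) p]])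
    show "continuous_on (UNIV \<times> A) (\<lambda>(Y, X). flux_grad b X Y c)"
      by (rule continuous_on_flux_grad_swapped)
    show "continuous_on A (\<lambda>X. flux b X Y' c)" for Y'
      by (rule continuous_on_subset[OF continuous_on_slice_snd[OF continuous_on_flux]]) (use A in auto)
  qed (use A in \<open>auto simp: sign_weight_eq_0 intro: has_derivative_flux\<close>)
qed

lemma continuous_on_dual_field_derivative:
  "continuous_on UNIV (\<lambda>Y. \<integral>X. (flux_grad b X Y c \<bullet> e) * sign_weight A p X \<partial>lborel)"
proof (rule continuous_on_parametric_integral[OF A(1) integrable_sign_weight[OF A(1) p]])
  show "continuous_on (UNIV \<times> A) (\<lambda>(Y, X). flux_grad b X Y c \<bullet> e)"
    using continuous_on_flux_grad_swapped by (simp add: case_prod_beta' continuous_intros)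
qed (simp add: sign_weight_eq_0)

lemma divergence_dual_field:
  assumes b: "b \<in> Basis"
  shows "divergence (dual_field b A p) Y = (\<integral>X. (kernel_grad X Y \<bullet> b) * sign_weight A p X \<partial>lborel)"
proof -
  have int: "integrable lborel (\<lambda>X. (flux_grad b X Y e \<bullet> e) * sign_weight A p X)" for e
    by (rule integrable_continuous_mult[OF A(1) _ integrable_sign_weight[OF A(1) p] sign_weight_eq_0])
       (intro continuous_intros continuous_on_subset[OF continuous_on_slice_snd[OF continuous_on_flux_grad]],
        use A in auto)
  have "divergence (dual_field b A p) Y
      = (\<Sum>e\<in>Basis. (\<integral>X. (flux_grad b X Y e \<bullet> e) * sign_weight A p X \<partial>lborel))"
    unfolding divergence_eq_of_has_derivative[OF has_derivative_dual_field]
    by (intro sum.cong refl) (simp add: inner_sum_left inner_Basis if_distrib cong: if_cong)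
  also have "\<dots> = (\<integral>X. (\<Sum>e\<in>Basis. (flux_grad b X Y e \<bullet> e) * sign_weight A p X) \<partial>lborel)"
    using int by (simp add: Bochner_Integration.integral_sum)
  also have "\<dots> = (\<integral>X. (kernel_grad X Y \<bullet> b) * sign_weight A p X \<partial>lborel)"
    by (intro Bochner_Integration.integral_cong refl)
       (simp add: sum_distrib_right[symmetric] sum_flux_grad_eq_kernel_grad[OF b])
  finally show ?thesis .
qed

lemma dual_field_eq_0: "Y \<notin> shadow A \<Longrightarrow> dual_field b A p Y = 0"
proof -
  assume Y: "Y \<notin> shadow A"
  have "flux b X Y c * sign_weight A p X = 0" for X c
  proof (cases "X \<in> A")
    case True
    then have "\<delta> X / 2 < dist X Y" using Y by (auto simp: shadow_def)
    then show ?thesis using True A(2) flux_eq_0_if_far by auto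
  qed (simp add: sign_weight_eq_0)
  then have "(\<lambda>X. flux b X Y c * sign_weight A p X) = (\<lambda>X. 0)" for c by (rule ext)
  then show ?thesis by (simp add: dual_field_def)
qed

lemma norm_dual_field_le_1:
  assumes b: "b \<in> Basis"
  shows "norm (dual_field b A p Y) \<le> 1"
proof -
  have "\<bar>\<integral>X. flux b X Y c * sign_weight A p X \<partial>lborel\<bar> \<le> flux_mass / test_scale"
    if c: "c \<in> Basis" for c
  proof -
    have cont: "continuous_on A (\<lambda>X. flux b X Y c)"
      by (rule continuous_on_subset[OF continuous_on_slice_snd[OF continuous_on_flux]]) (use A in auto)
    have "\<bar>\<integral>X. flux b X Y c * sign_weight A p X \<partial>lborel\<bar>
        \<le> (\<integral>X. \<bar>flux b X Y c * sign_weight A p X\<bar> \<partial>lborel)"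
      using integral_norm_bound[of lborel "\<lambda>X. flux b X Y c * sign_weight A p X"] by simp
    also have "\<dots> \<le> (\<integral>X. indicator A X * \<bar>flux b X Y c\<bar> / test_scale \<partial>lborel)"
    proof (rule integral_mono)
      show "integrable lborel (\<lambda>X. \<bar>flux b X Y c * sign_weight A p X\<bar>)"
        by (intro integrable_abs integrable_continuous_mult[OF A(1) cont integrable_sign_weight[OF A(1) p]]
            sign_weight_eq_0)
      show "integrable lborel (\<lambda>X. indicator A X * \<bar>flux b X Y c\<bar> / test_scale)"
        by (intro integrable_divide integrable_indicator_mult_continuous[OF A(1)] continuous_intros cont)
      show "\<bar>flux b X Y c * sign_weight A p X\<bar> \<le> indicator A X * \<bar>flux b X Y c\<bar> / test_scale" for X
        using mult_left_mono[OF abs_sign_weight_le, of "\<bar>flux b X Y c\<bar>" A p X]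
        by (simp add: abs_mult mult.commute)
    qed
    also have "\<dots> \<le> flux_mass / test_scale"
      using integral_indicator_abs_flux_le[OF A b c, of Y] test_scale_pos by (simp add: divide_right_mono)
    finally show ?thesis .
  qed
  then have "norm (dual_field b A p Y) \<le> (\<Sum>c\<in>(Basis::'a set). flux_mass / test_scale)"
    unfolding dual_field_def by (intro order_trans[OF norm_sum] sum_mono) simp
  also have "\<dots> = 1" using flux_mass_pos by (simp add: test_scale_def)
  finally show ?thesis .
qed

lemma dual_field_in_test_fields:
  assumes b: "b \<in> Basis" and U: "shadow A \<subseteq> U"
  shows "dual_field b A p \<in> test_fields U"
proof -
  have supp: "closure {Y. dual_field b A p Y \<noteq> 0} \<subseteq> shadow A"
    using dual_field_eq_0 by (intro closure_minimal compact_imp_closed compact_shadow A) blast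
  have "compact (shadow A \<inter> closure {Y. dual_field b A p Y \<noteq> 0})"
    by (rule compact_Int_closed[OF compact_shadow[OF A] closed_closure])
  moreover have "shadow A \<inter> closure {Y. dual_field b A p Y \<noteq> 0} = closure {Y. dual_field b A p Y \<noteq> 0}"
    using supp by blast
  moreover have "continuous_on UNIV (\<lambda>Y. frechet_derivative (dual_field b A p) (at Y) e)" for e
    unfolding frechet_derivative_at[OF has_derivative_dual_field, symmetric]
    by (intro continuous_intros continuous_on_dual_field_derivative)
  moreover have "dual_field b A p differentiable (at Y)" for Y
    using has_derivative_dual_field by (rule differentiableI)
  ultimately show ?thesis
    unfolding test_fields_def using supp U norm_dual_field_le_1[OF b] by auto
qed

end

section \<open>The Carleson estimate\<close>

lemma G0_mult_divergence_dual_field: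
  assumes A: "compact A" "A \<subseteq> UNIV - E" and p: "continuous_on A p" and b: "b \<in> Basis"
  shows "G0 Y * divergence (dual_field b A p) Y
    = (\<integral>X. sign_weight A p X * (kernel_grad X Y \<bullet> b) * (indicator (shadow A) Y * G0 Y) \<partial>lborel)"
proof (cases "Y \<in> shadow A")
  case False
  have "(kernel_grad X Y \<bullet> b) * sign_weight A p X = 0" for X
  proof (cases "X \<in> A")
    case True
    then have "\<delta> X / 2 < dist X Y" using False by (auto simp: shadow_def)
    then show ?thesis using True A(2) kernel_grad_eq_0_if_far by auto
  qed (simp add: sign_weight_eq_0)
  then have "(\<lambda>X. (kernel_grad X Y \<bullet> b) * sign_weight A p X) = (\<lambda>X. 0)" by (rule ext)
  then show ?thesis using False by (simp add: divergence_dual_field[OF A p b])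
qed (simp add: divergence_dual_field[OF A p b] mult_ac)

lemma borel_measurable_dual_pairing:
  assumes A: "compact A" "A \<subseteq> UNIV - E" and p: "continuous_on A p"
    and g: "g \<in> borel_measurable lborel"
  shows "(\<lambda>q. sign_weight A p (fst q) * (kernel_grad (fst q) (snd q) \<bullet> b) * g (snd q))
    \<in> borel_measurable (lborel \<Otimes>\<^sub>M lborel)"
proof -
  have "(\<lambda>q. indicator (A \<times> UNIV) q *\<^sub>R (kernel_grad (fst q) (snd q) \<bullet> b)) \<in> borel_measurable borel"
    using A continuous_on_subset[OF continuous_on_kernel_grad, of "A \<times> UNIV"]
    by (intro borel_measurable_continuous_on_indicator)
       (auto simp: borel_closed closed_Times compact_imp_closed case_prod_beta' intro!: continuous_intros)
  then have m1: "(\<lambda>q. indicator (A \<times> UNIV) q *\<^sub>R (kernel_grad (fst q) (snd q) \<bullet> b))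
      \<in> borel_measurable (lborel \<Otimes>\<^sub>M lborel)"
    by (simp add: lborel_prod)
  have m2: "(\<lambda>q. sign_weight A p (fst q)) \<in> borel_measurable (lborel \<Otimes>\<^sub>M lborel)"
    using borel_measurable_sign_weight[OF A(1) p] by measurable
  have m3: "(\<lambda>q. g (snd q)) \<in> borel_measurable (lborel \<Otimes>\<^sub>M lborel)"
    using g by measurable
  have "(\<lambda>q. sign_weight A p (fst q) * (kernel_grad (fst q) (snd q) \<bullet> b) * g (snd q))
      = (\<lambda>q. sign_weight A p (fst q)
          * (indicator (A \<times> UNIV) q *\<^sub>R (kernel_grad (fst q) (snd q) \<bullet> b)) * g (snd q))"
    by (auto simp: fun_eq_iff sign_weight_eq_0 indicator_def)
  also have "\<dots> \<in> borel_measurable (lborel \<Otimes>\<^sub>M lborel)"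
    by (intro borel_measurable_times m1 m2 m3)
  finally show ?thesis .
qed

lemma integrable_dual_pairing:
  assumes G0: "loc_integrable (UNIV - E) G0"
    and A: "compact A" "A \<subseteq> UNIV - E" and p: "continuous_on A p"
  shows "integrable (lborel \<Otimes>\<^sub>M lborel)
    (\<lambda>(X, Y). sign_weight A p X * (kernel_grad X Y \<bullet> b) * (indicator (shadow A) Y * G0 Y))"
proof -
  let ?S = "shadow A"
  define g where "g Y = indicator ?S Y * G0 Y" for Y
  have S: "compact ?S" "?S \<subseteq> UNIV - E" using compact_shadow[OF A] shadow_subset_complement[OF A(2)] .
  have g: "integrable lborel g"
    unfolding g_def by (rule integrable_indicator_mult_loc_integrable[OF G0 S])
  have "continuous_on (A \<times> ?S) (\<lambda>(X, Y). kernel_grad X Y \<bullet> b)"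
    using continuous_on_subset[OF continuous_on_kernel_grad, of "A \<times> ?S"] A(2)
    by (auto simp: case_prod_beta' intro!: continuous_intros)
  then have "bounded ((\<lambda>(X, Y). kernel_grad X Y \<bullet> b) ` (A \<times> ?S))"
    by (intro compact_imp_bounded compact_continuous_image compact_Times A(1) S(1))
  then have "\<exists>D. \<forall>X\<in>A. \<forall>Y\<in>?S. \<bar>kernel_grad X Y \<bullet> b\<bar> \<le> D"
    by (auto simp: bounded_iff)
  then obtain D where D: "\<And>X Y. X \<in> A \<Longrightarrow> Y \<in> ?S \<Longrightarrow> \<bar>kernel_grad X Y \<bullet> b\<bar> \<le> D"
    by blast
  have "\<bar>sign_weight A p X * (kernel_grad X Y \<bullet> b) * g Y\<bar> \<le> \<bar>D\<bar> / test_scale * (indicator A X * \<bar>g Y\<bar>)"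
    for X Y
  proof (cases "X \<in> A \<and> Y \<in> ?S")
    case True
    then have "\<bar>kernel_grad X Y \<bullet> b\<bar> \<le> \<bar>D\<bar>" using D[of X Y] by auto
    then have "\<bar>sign_weight A p X\<bar> * \<bar>kernel_grad X Y \<bullet> b\<bar> \<le> 1 / test_scale * \<bar>D\<bar>"
      using abs_sign_weight_le[of A p X] True test_scale_pos by (intro mult_mono) auto
    from mult_right_mono[OF this abs_ge_zero[of "g Y"]] show ?thesis
      using True by (simp add: abs_mult)
  qed (auto simp: g_def sign_weight_eq_0)
  then have "integrable (lborel \<Otimes>\<^sub>M lborel) (\<lambda>(X, Y). sign_weight A p X * (kernel_grad X Y \<bullet> b) * g Y)"
    using borel_measurable_dual_pairing[OF A p borel_measurable_integrable[OF g]]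
    by (intro integrable_pair_dominated[OF _ A(1) g, where C = "\<bar>D\<bar> / test_scale"])
       (simp_all add: case_prod_beta')
  then show ?thesis by (simp add: g_def)
qed

lemma integral_G0_mult_divergence_dual_field:
  assumes G0: "loc_integrable (UNIV - E) G0" and A: "compact A" "A \<subseteq> UNIV - E" and b: "b \<in> Basis"
  defines "p \<equiv> partial_regularize G0 b"
  shows "(\<integral>Y. G0 Y * divergence (dual_field b A p) Y \<partial>lborel)
    = (\<integral>X. indicator A X * \<bar>p X\<bar> \<partial>lborel) / test_scale"
proof -
  let ?S = "shadow A"
  have p: "continuous_on A p"
    unfolding p_def by (rule continuous_on_subset[OF continuous_on_partial_regularize[OF G0] A(2)])
  have "(\<integral>Y. G0 Y * divergence (dual_field b A p) Y \<partial>lborel)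
      = (\<integral>Y. (\<integral>X. sign_weight A p X * (kernel_grad X Y \<bullet> b) * (indicator ?S Y * G0 Y) \<partial>lborel) \<partial>lborel)"
    by (simp add: G0_mult_divergence_dual_field[OF A p b])
  also have "\<dots> = (\<integral>X. (\<integral>Y. sign_weight A p X * (kernel_grad X Y \<bullet> b) * (indicator ?S Y * G0 Y) \<partial>lborel) \<partial>lborel)"
    using lborel_pair.Fubini_integral[OF integrable_dual_pairing[OF G0 A p]] by simp
  also have "\<dots> = (\<integral>X. sign_weight A p X * p X \<partial>lborel)"
  proof (intro Bochner_Integration.integral_cong refl)
    fix X
    show "(\<integral>Y. sign_weight A p X * (kernel_grad X Y \<bullet> b) * (indicator ?S Y * G0 Y) \<partial>lborel)
        = sign_weight A p X * p X"
    proof (cases "X \<in> A")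
      case True
      then have "p X = (\<integral>Y. (kernel_grad X Y \<bullet> b) * (indicator ?S Y * G0 Y) \<partial>lborel)"
        unfolding p_def partial_regularize_def using A(2) kernel_grad_eq_0_if_far
        by (intro integral_localize) (auto simp: shadow_def)
      then show ?thesis by (simp add: mult.assoc)
    qed (simp add: sign_weight_eq_0)
  qed
  also have "\<dots> = (\<integral>X. indicator A X * \<bar>p X\<bar> \<partial>lborel) / test_scale"
    by (simp add: sign_weight_mult)
  finally show ?thesis .
qed

lemma nn_integral_abs_partial_regularize_compact_le:
  assumes G0: "loc_integrable (UNIV - E) G0" and A: "compact A" "A \<subseteq> ball z r \<inter> (UNIV - E)"
    and z: "z \<in> E" and b: "b \<in> Basis"
  shows "(\<integral>\<^sup>+X. ennreal \<bar>partial_regularize G0 b X\<bar> * indicator A X \<partial>lborel)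
    \<le> ennreal test_scale * total_variation G0 (ball z (2 * r) \<inter> (UNIV - E))"
proof -
  let ?p = "partial_regularize G0 b"
  have AE: "A \<subseteq> UNIV - E" using A by auto
  have p: "continuous_on A ?p"
    by (rule continuous_on_subset[OF continuous_on_partial_regularize[OF G0] AE])
  have test: "dual_field b A ?p \<in> test_fields (ball z (2 * r) \<inter> (UNIV - E))"
    using shadow_subset_ball[of A z r] shadow_subset_complement[OF AE] A z
    by (intro dual_field_in_test_fields[OF A(1) AE p b]) auto
  have int: "integrable lborel (\<lambda>X. indicator A X * \<bar>?p X\<bar>)"
    by (intro integrable_indicator_mult_continuous[OF A(1)] continuous_intros p)
  have "(\<integral>\<^sup>+X. ennreal \<bar>?p X\<bar> * indicator A X \<partial>lborel) = ennreal (\<integral>X. indicator A X * \<bar>?p X\<bar> \<partial>lborel)"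
    using nn_integral_eq_integral[OF int] by (simp add: indicator_mult_ennreal mult.commute)
  also have "\<dots> = ennreal test_scale * ennreal (\<integral>Y. G0 Y * divergence (dual_field b A ?p) Y \<partial>lborel)"
    using test_scale_pos
    by (simp add: integral_G0_mult_divergence_dual_field[OF G0 A(1) AE b] ennreal_mult'[symmetric])
  also have "\<dots> \<le> ennreal test_scale * total_variation G0 (ball z (2 * r) \<inter> (UNIV - E))"
    unfolding total_variation_def by (intro mult_left_mono SUP_upper test) simp
  finally show ?thesis .
qed

lemma borel_measurable_abs_partial_regularize:
  assumes G0: "loc_integrable (UNIV - E) G0" and B: "B \<in> sets borel" "B \<subseteq> UNIV - E"
  shows "(\<lambda>X. ennreal \<bar>partial_regularize G0 b X\<bar> * indicator B X) \<in> borel_measurable lborel"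
proof -
  have "(\<lambda>X. indicator (UNIV - E) X *\<^sub>R partial_regularize G0 b X) \<in> borel_measurable borel"
    by (intro borel_measurable_continuous_on_indicator continuous_on_partial_regularize G0)
       (simp add: open_complement borel_open)
  then have "(\<lambda>X. ennreal \<bar>indicator (UNIV - E) X *\<^sub>R partial_regularize G0 b X\<bar> * indicator B X)
      \<in> borel_measurable lborel"
    using B(1) by simp
  also have "(\<lambda>X. ennreal \<bar>indicator (UNIV - E) X *\<^sub>R partial_regularize G0 b X\<bar> * indicator B X)
      = (\<lambda>X. ennreal \<bar>partial_regularize G0 b X\<bar> * indicator B X)"
    using B(2) by (auto simp: fun_eq_iff indicator_def)
  finally show ?thesis .
qed

lemma nn_integral_abs_partial_regularize_ball_le:
  assumes G0: "loc_integrable (UNIV - E) G0" and z: "z \<in> E" and b: "b \<in> Basis"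
  shows "(\<integral>\<^sup>+X. ennreal \<bar>partial_regularize G0 b X\<bar> * indicator (ball z r \<inter> (UNIV - E)) X \<partial>lborel)
    \<le> ennreal test_scale * total_variation G0 (ball z (2 * r) \<inter> (UNIV - E))"
proof (rule nn_integral_open_le_if_compact_le)
  show "open (ball z r \<inter> (UNIV - E))" using open_complement by auto
  then show "(\<lambda>X. ennreal \<bar>partial_regularize G0 b X\<bar> * indicator (ball z r \<inter> (UNIV - E)) X)
      \<in> borel_measurable lborel"
    by (intro borel_measurable_abs_partial_regularize G0) auto
qed (rule nn_integral_abs_partial_regularize_compact_le[OF G0 _ _ z b])

lemma nn_integral_norm_grad_regularize_le:
  assumes G0: "loc_integrable (UNIV - E) G0" and z: "z \<in> E"
  shows "(\<integral>\<^sup>+X\<in>ball z r \<inter> (UNIV - E). ennreal (norm (grad (regularize \<beta> \<zeta> G0) X)) \<partial>lborel)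
    \<le> ennreal (real DIM('a) * test_scale) * total_variation G0 (ball z (2 * r) \<inter> (UNIV - E))"
proof -
  let ?B = "ball z r \<inter> (UNIV - E)" and ?T = "total_variation G0 (ball z (2 * r) \<inter> (UNIV - E))"
  have "ennreal (norm (grad (regularize \<beta> \<zeta> G0) X)) * indicator ?B X
      \<le> (\<Sum>b\<in>Basis. ennreal \<bar>partial_regularize G0 b X\<bar> * indicator ?B X)" for X
  proof (cases "X \<in> ?B")
    case True
    then have "norm (grad (regularize \<beta> \<zeta> G0) X) \<le> (\<Sum>b\<in>Basis. \<bar>partial_regularize G0 b X\<bar>)"
      using norm_le_l1[of "grad (regularize \<beta> \<zeta> G0) X"]
      by (simp add: grad_regularize[OF G0] inner_sum_left inner_Basis if_distrib cong: if_cong)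
    then show ?thesis using True by (simp add: ennreal_leI sum_ennreal)
  qed simp
  then have "(\<integral>\<^sup>+X\<in>?B. ennreal (norm (grad (regularize \<beta> \<zeta> G0) X)) \<partial>lborel)
      \<le> (\<integral>\<^sup>+X. (\<Sum>b\<in>Basis. ennreal \<bar>partial_regularize G0 b X\<bar> * indicator ?B X) \<partial>lborel)"
    by (intro nn_integral_mono) simp
  also have "\<dots> = (\<Sum>b\<in>Basis. \<integral>\<^sup>+X. ennreal \<bar>partial_regularize G0 b X\<bar> * indicator ?B X \<partial>lborel)"
    using open_complement
    by (intro nn_integral_sum borel_measurable_abs_partial_regularize G0) (auto simp: borel_open)
  also have "\<dots> \<le> (\<Sum>b\<in>(Basis::'a set). ennreal test_scale * ?T)"
    by (intro sum_mono nn_integral_abs_partial_regularize_ball_le G0 z)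
  also have "\<dots> = ennreal (real DIM('a) * test_scale) * ?T"
    using test_scale_pos by (simp add: ennreal_mult' ennreal_of_nat_eq_real_of_nat[symmetric] mult.assoc)
  finally show ?thesis .
qed

theorem carleson_grad_regularize_le:
  assumes G0: "loc_integrable (UNIV - E) G0"
  shows "(SUP z\<in>E. SUP r\<in>{0<..}.
      (\<integral>\<^sup>+X\<in>ball z r \<inter> (UNIV - E). ennreal (norm (grad (regularize \<beta> \<zeta> G0) X)) \<partial>lborel)
        / ennreal (r ^ (DIM('a) - 1)))
    \<le> ennreal (real DIM('a) * test_scale * 2 ^ (DIM('a) - 1)) * carleson_norm E (total_variation G0)"
proof (intro SUP_least)
  fix z r assume z: "z \<in> E" and "r \<in> {0::real<..}"
  then have r: "0 < r" by simp
  have "total_variation G0 (ball z (2 * r) \<inter> (UNIV - E)) / ennreal ((2 * r) ^ (DIM('a) - 1))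
      \<le> carleson_norm E (total_variation G0)"
    unfolding carleson_norm_def using z r by (intro SUP_upper2[OF z] SUP_upper2[of "2 * r"]) auto
  then show "(\<integral>\<^sup>+X\<in>ball z r \<inter> (UNIV - E). ennreal (norm (grad (regularize \<beta> \<zeta> G0) X)) \<partial>lborel)
        / ennreal (r ^ (DIM('a) - 1))
      \<le> ennreal (real DIM('a) * test_scale * 2 ^ (DIM('a) - 1)) * carleson_norm E (total_variation G0)"
    using nn_integral_norm_grad_regularize_le[OF G0 z] r test_scale_pos
    by (intro ennreal_divide_le_doubling) auto
qed

end

theorem lemma3p6:
  fixes E :: "'a::euclidean_space set"
    and \<beta> \<zeta> :: "'a \<Rightarrow> real"
    and m1 m2 :: real
  assumes "closed E"
    and "0 < m1" and "0 < m2"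
    and "\<forall>X\<in>UNIV - E. 0 < \<beta> X"
    and "smooth_on (UNIV - E) \<beta>"
    and "\<forall>X\<in>UNIV - E. m1 * infdist X E \<le> \<beta> X \<and> \<beta> X \<le> m2 * infdist X E"
    and "\<forall>vs. set vs \<subseteq> Basis \<longrightarrow> (\<exists>C. \<forall>X\<in>UNIV - E.
            \<bar>iderv \<beta> vs X\<bar> \<le> C * \<beta> X powr (1 - real (length vs)))"
    and "smooth_on UNIV \<zeta>"
    and "\<forall>X. 0 \<le> \<zeta> X \<and> \<zeta> X \<le> 1"
    and "\<forall>X. \<zeta> X \<noteq> 0 \<longrightarrow> X \<in> ball 0 (1 / (2 * m2))"
    and "(\<zeta> has_integral 1) UNIV"
  shows "\<exists>C>0. \<forall>G0 :: 'a \<Rightarrow> real.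
           BV_loc (UNIV - E) G0 \<and> carleson_norm E (total_variation G0) < \<infinity> \<longrightarrow>
             (\<forall>X\<in>UNIV - E. regularize \<beta> \<zeta> G0 differentiable (at X)) \<and>
             (SUP z\<in>E. SUP r\<in>{0<..}.
                (\<integral>\<^sup>+ X\<in>ball z r \<inter> (UNIV - E). ennreal (norm (grad (regularize \<beta> \<zeta> G0) X)) \<partial>lborel)
                  / ennreal (r ^ (DIM('a) - 1)))
               \<le> ennreal C * carleson_norm E (total_variation G0)"
proof -
  obtain C\<beta> where C\<beta>: "0 \<le> C\<beta>" "\<And>X. X \<in> UNIV - E \<Longrightarrow> norm (grad \<beta> X) \<le> C\<beta>"
    using norm_grad_bounded_if_scaled_derivative_bounds[OF _ assms(7)] assms(4) by blast
  interpret C1_regularization E \<beta> \<zeta> m1 m2 C\<beta>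
  proof
    show "(\<beta> has_derivative (\<lambda>h. grad \<beta> X \<bullet> h)) (at X)" if "X \<notin> E" for X
      using smooth_on_has_derivative_grad[OF assms(5)] that by blast
    show "continuous_on (UNIV - E) (grad \<beta>)"
      using smooth_on_continuous_grad[OF assms(5)] assms(1) by (simp add: open_Diff)
    show "(\<zeta> has_derivative (\<lambda>h. grad \<zeta> Z \<bullet> h)) (at Z)" for Z
      using smooth_on_has_derivative_grad[OF assms(8)] by blast
    show "continuous_on UNIV (grad \<zeta>)"
      using smooth_on_continuous_grad[OF assms(8)] by simp
  qed (use assms(1-4,6,9,10) C\<beta> in auto)
  let ?C = "real DIM('a) * test_scale * 2 ^ (DIM('a) - 1)"
  show ?thesis
  proof (intro exI[of _ ?C] conjI allI impI)
    show "0 < ?C" using test_scale_pos by simp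
    fix G0 :: "'a \<Rightarrow> real"
    assume "BV_loc (UNIV - E) G0 \<and> carleson_norm E (total_variation G0) < \<infinity>"
    then have G0: "loc_integrable (UNIV - E) G0" by (simp add: BV_loc_def)
    show "\<forall>X\<in>UNIV - E. regularize \<beta> \<zeta> G0 differentiable (at X)"
      using differentiable_regularize[OF G0] by blast
    show "(SUP z\<in>E. SUP r\<in>{0<..}.
        (\<integral>\<^sup>+ X\<in>ball z r \<inter> (UNIV - E). ennreal (norm (grad (regularize \<beta> \<zeta> G0) X)) \<partial>lborel)
          / ennreal (r ^ (DIM('a) - 1))) \<le> ennreal ?C * carleson_norm E (total_variation G0)"
      by (rule carleson_grad_regularize_le[OF G0])
  qed
qed

end
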